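(* Let $K,T\subset\mathbb{R}^2$ be convex bodies, where $T$ is strictly convex and smooth. Then every $\ell_T$-minimizing closed $(K,T)$-Minkowski billiard trajectory $q=(q_1,\dots,q_m)$ satisfies $m\in\{2,3\}$, and if $m=3$ all bouncing points $q_1,q_2,q_3$ are smooth boundary points of $K$. Moreover, if $q$ fulfills the Minkowski billiard reflection rule with respect to $K$-supporting lines $H_1,\dots,H_m$, then: (i) the convex cone $U$ spanned by the unit vectors $n_K(q_1),\dots,n_K(q_m)$ normal to $H_1,\dots,H_m$ is a linear subspace of $\mathbb{R}^2$ with $\dim U=m-1$; (ii) if $V\subseteq\mathbb{R}^2$ is an affine subspace such that $K\cap V$ is the inclusion-minimal affine section of $K$ containing $q$, then $\dim V=m-1$.
   Context: A convex body is a compact convex set containing the origin in its interior; it is smooth if through each boundary point there is a unique supporting hyperplane; a boundary point is smooth if there is a unique supporting hyperplane through it. For a convex body $T$, $T^\circ$ is its polar body and $\mu_{T^\circ}(x)=\min\{t\ge 0: x\in tT^\circ\}$. For a convex set $C$ and $z\in\partial C$, $N_C(z)=\{v:\langle v,y-z\rangle\le 0\ \forall y\in C\}$. A closed polygonal curve $(q_1,\dots,q_m)$, $m\ge2$, always satisfies $q_j\ne q_{j+1}$ and $q_j\notin[q_{j-1},q_{j+1}]$ (indices mod $m$); $\ell_T(q)=\sum_j\mu_{T^\circ}(q_{j+1}-q_j)$. A closed polygonal curve $q$ with vertices on $\partial K$ is a closed $(K,T)$-Minkowski billiard trajectory if there are $p_1,\dots,p_m\in\partial T$ with $q_{j+1}-q_j\in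 N_T(p_j)$ and $p_{j+1}-p_j\in -N_K(q_{j+1})$ for all $j$; it fulfills the reflection rule with respect to the $K$-supporting lines $H_j$ through $q_j$ if there are outer unit normals $n_K(q_j)\in N_K(q_j)$ normal to $H_j$ and $\mu_j\ge0$ with $p_{j+1}-p_j=-\mu_{j+1}n_K(q_{j+1})$ for all $j$. It is $\ell_T$-minimizing if its $\ell_T$-length is minimal among all closed $(K,T)$-Minkowski billiard trajectories. *)

theory Defs
  imports "HOL-Analysis.Analysis"
begin

type_synonym pt = "real^2"

definition convex_body :: "pt set \<Rightarrow> bool" where
  "convex_body C \<longleftrightarrow> compact C \<and> convex C \<and> 0 \<in> interior C"

definition supporting_hyperplane :: "pt set \<Rightarrow> pt \<Rightarrow> pt set \<Rightarrow> bool" where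
  "supporting_hyperplane C z H \<longleftrightarrow>
     (\<exists>a b. a \<noteq> 0 \<and> H = {x. a \<bullet> x = b} \<and> z \<in> H \<and> (\<forall>x\<in>C. a \<bullet> x \<le> b))"

definition smooth_point :: "pt set \<Rightarrow> pt \<Rightarrow> bool" where
  "smooth_point C z \<longleftrightarrow> z \<in> frontier C \<and> (\<exists>!H. supporting_hyperplane C z H)"

definition smooth_body :: "pt set \<Rightarrow> bool" where
  "smooth_body C \<longleftrightarrow> (\<forall>z\<in>frontier C. \<exists>!H. supporting_hyperplane C z H)"

definition strictly_convex :: "pt set \<Rightarrow> bool" where
  "strictly_convex C \<longleftrightarrow> (\<forall>x\<in>C. \<forall>y\<in>C. x \<noteq> y \<longrightarrow> open_segment x y \<subseteq> interior C)"

definition polar :: "pt set \<Rightarrow> pt set" where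
  "polar C = {y. \<forall>x\<in>C. x \<bullet> y \<le> 1}"

definition mu_polar :: "pt set \<Rightarrow> pt \<Rightarrow> real" where
  "mu_polar T x = Inf {t. t \<ge> 0 \<and> x \<in> (\<lambda>y. t *\<^sub>R y) ` polar T}"

definition normal_cone :: "pt set \<Rightarrow> pt \<Rightarrow> pt set" where
  "normal_cone C z = {v. \<forall>y\<in>C. v \<bullet> (y - z) \<le> 0}"

text \<open>indices 0..m-1 taken mod m (paper: 1..m)\<close>
definition nxt :: "nat \<Rightarrow> nat \<Rightarrow> nat" where
  "nxt m j = Suc j mod m"

definition prv :: "nat \<Rightarrow> nat \<Rightarrow> nat" where
  "prv m j = (j + m - 1) mod m"

definition closed_polygon :: "pt list \<Rightarrow> bool" where
  "closed_polygon q \<longleftrightarrow> length q \<ge> 2 \<and>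
     (\<forall>j<length q. q ! j \<noteq> q ! nxt (length q) j \<and>
        q ! j \<notin> closed_segment (q ! prv (length q) j) (q ! nxt (length q) j))"

definition ellT :: "pt set \<Rightarrow> pt list \<Rightarrow> real" where
  "ellT T q = (\<Sum>j<length q. mu_polar T (q ! nxt (length q) j - q ! j))"

definition billiard_traj_with :: "pt set \<Rightarrow> pt set \<Rightarrow> pt list \<Rightarrow> (nat \<Rightarrow> pt) \<Rightarrow> bool" where
  "billiard_traj_with K T q p \<longleftrightarrow> closed_polygon q \<and> set q \<subseteq> frontier K \<and>
     (\<forall>j<length q. p j \<in> frontier T \<and>
        q ! nxt (length q) j - q ! j \<in> normal_cone T (p j) \<and>
        p (nxt (length q) j) - p j \<in> uminus ` normal_cone K (q ! nxt (length q) j))"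

definition billiard_traj :: "pt set \<Rightarrow> pt set \<Rightarrow> pt list \<Rightarrow> bool" where
  "billiard_traj K T q \<longleftrightarrow> (\<exists>p. billiard_traj_with K T q p)"

definition minimizing_traj :: "pt set \<Rightarrow> pt set \<Rightarrow> pt list \<Rightarrow> bool" where
  "minimizing_traj K T q \<longleftrightarrow> billiard_traj K T q \<and>
     (\<forall>q'. billiard_traj K T q' \<longrightarrow> ellT T q \<le> ellT T q')"

definition reflection_rule ::
  "pt set \<Rightarrow> pt list \<Rightarrow> (nat \<Rightarrow> pt) \<Rightarrow> (nat \<Rightarrow> pt set) \<Rightarrow> (nat \<Rightarrow> pt) \<Rightarrow> (nat \<Rightarrow> real) \<Rightarrow> bool" where
  "reflection_rule K q p H n mu \<longleftrightarrow>
     (\<forall>j<length q. supporting_hyperplane K (q ! j) (H j) \<and>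
        norm (n j) = 1 \<and> n j \<in> normal_cone K (q ! j) \<and>
        (\<forall>x\<in>H j. n j \<bullet> (x - q ! j) = 0) \<and> mu j \<ge> 0 \<and>
        p (nxt (length q) j) - p j = - (mu (nxt (length q) j) *\<^sub>R n (nxt (length q) j)))"

definition minimal_affine_section :: "pt set \<Rightarrow> pt list \<Rightarrow> pt set \<Rightarrow> bool" where
  "minimal_affine_section K q V \<longleftrightarrow> affine V \<and> set q \<subseteq> K \<inter> V \<and>
     (\<forall>W. affine W \<and> set q \<subseteq> K \<inter> W \<longrightarrow> K \<inter> V \<subseteq> K \<inter> W)"

end

theory Submission
  imports Defs
begin

text \<open>
  The length \<open>ellT T\<close> of a closed polygon is the sum of the support function \<open>h\<^sub>T\<close> of \<open>T\<close> over its
  edges. The key objects are the possibly degenerate triangles in \<open>K\<close> that cannot be translated into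
  the interior of \<open>K\<close>, i.e. that carry normals of \<open>K\<close> at their vertices summing to zero. Normals of
  one body serve as edge vectors of such a triangle in the other one; playing this duality back and
  forth shows that a triangle minimising \<open>h\<^sub>T\<close>-length in this class is, after pruning degenerate
  vertices, a closed billiard trajectory. So a minimising trajectory is no longer than any such
  triangle.

  If a trajectory has \<open>m \<ge> 4\<close> bounces, Carath\'eodory's theorem applied to its normals, which sum to
  zero, yields three bounce points with balancing normals, and the triangle on them is strictly
  shorter since strict convexity makes \<open>h\<^sub>T\<close> strictly subadditive on consecutive edges. If \<open>m = 3\<close> and a
  bounce point is a corner of \<open>K\<close>, tilting the normal there again produces a shorter such triangle.
  The statements on the normal cone and on affine sections are then linear algebra in the plane.
\<close>

section \<open>Support functions\<close>

definition support_fun :: "'a::real_inner set \<Rightarrow> 'a \<Rightarrow> real" where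
  "support_fun C v = Sup ((\<lambda>x. v \<bullet> x) ` C)"

lemma support_fun_ge:
  assumes "compact C" "x \<in> C" shows "v \<bullet> x \<le> support_fun C v"
proof -
  have "bounded ((\<lambda>x. v \<bullet> x) ` C)"
    using assms(1) by (intro compact_imp_bounded compact_continuous_image continuous_intros)
  then show ?thesis
    unfolding support_fun_def using assms(2) by (auto intro: cSup_upper bounded_imp_bdd_above)
qed

lemma support_fun_eqI:
  assumes "compact C" "x \<in> C" "\<And>y. y \<in> C \<Longrightarrow> v \<bullet> y \<le> v \<bullet> x"
  shows "support_fun C v = v \<bullet> x"
proof -
  have "support_fun C v \<le> v \<bullet> x" unfolding support_fun_def
    using assms(2,3) by (auto intro!: cSup_least)
  with support_fun_ge[OF assms(1,2), of v] show ?thesis by linarith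
qed

lemma support_fun_attained:
  assumes "compact C" "C \<noteq> {}" obtains x where "x \<in> C" "support_fun C v = v \<bullet> x"
proof -
  have "continuous_on C (\<lambda>x. v \<bullet> x)" by (intro continuous_intros)
  then obtain x where "x \<in> C" "\<And>y. y \<in> C \<Longrightarrow> v \<bullet> y \<le> v \<bullet> x"
    using continuous_attains_sup[OF assms] by blast
  then show ?thesis using support_fun_eqI[OF assms(1)] that by blast
qed

lemma normal_cone_support_funI:
  assumes "compact C" "x \<in> C" "support_fun C v = v \<bullet> x" shows "v \<in> normal_cone C x"
  using support_fun_ge[OF assms(1), of _ v] assms(3) by (auto simp: normal_cone_def inner_diff_right)

lemma support_fun_normal_cone:
  assumes "compact C" "x \<in> C" "v \<in> normal_cone C x" shows "support_fun C v = v \<bullet> x"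
  using assms by (intro support_fun_eqI) (auto simp: normal_cone_def inner_diff_right)

lemma support_fun_scaleR:
  assumes "compact C" "C \<noteq> {}" "c \<ge> 0" shows "support_fun C (c *\<^sub>R v) = c * support_fun C v"
proof -
  obtain x where x: "x \<in> C" "support_fun C v = v \<bullet> x" using support_fun_attained[OF assms(1,2)] .
  have "(c *\<^sub>R v) \<bullet> y \<le> (c *\<^sub>R v) \<bullet> x" if "y \<in> C" for y
    using support_fun_ge[OF assms(1) that, of v] x assms(3) by (auto intro: mult_left_mono)
  then show ?thesis using support_fun_eqI[OF assms(1) x(1)] x by simp
qed

lemma support_fun_0: assumes "compact C" "C \<noteq> {}" shows "support_fun C 0 = 0"
  using support_fun_scaleR[OF assms, of 0 0] by simp

lemma support_fun_add_le:
  assumes "compact C" "C \<noteq> {}" shows "support_fun C (u + v) \<le> support_fun C u + support_fun C v"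
proof -
  obtain x where "x \<in> C" "support_fun C (u + v) = (u + v) \<bullet> x" using support_fun_attained[OF assms] .
  then show ?thesis using support_fun_ge[OF assms(1), of x] by (simp add: inner_add_left add_mono)
qed

lemma support_fun_sum_le:
  assumes "compact C" "C \<noteq> {}" "finite J"
  shows "support_fun C (\<Sum>j\<in>J. f j) \<le> (\<Sum>j\<in>J. support_fun C (f j))"
  using assms(3)
proof (induction J)
  case empty then show ?case using support_fun_0[OF assms(1,2)] by simp
next
  case (insert j J)
  then show ?case using support_fun_add_le[OF assms(1,2), of "f j" "sum f J"] by simp
qed

lemma lipschitz_on_support_fun:
  assumes "compact C" "C \<noteq> {}" "C \<subseteq> cball 0 R" "R \<ge> 0"
  shows "R-lipschitz_on UNIV (support_fun C)"
proof (rule lipschitz_onI)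
  have le: "support_fun C u - support_fun C v \<le> R * norm (u - v)" for u v
  proof -
    obtain x where x: "x \<in> C" "support_fun C u = u \<bullet> x" using support_fun_attained[OF assms(1,2)] .
    have "(u - v) \<bullet> x \<le> norm (u - v) * norm x" by (rule norm_cauchy_schwarz)
    also have "\<dots> \<le> norm (u - v) * R" using assms(3) x(1) by (intro mult_left_mono) auto
    finally show ?thesis using support_fun_ge[OF assms(1) x(1), of v] x(2)
      by (simp add: inner_diff_left mult.commute)
  qed
  show "dist (support_fun C u) (support_fun C v) \<le> R * dist u v" for u v
    using le[of u v] le[of v u] by (simp add: dist_norm dist_real_def abs_le_iff norm_minus_commute)
qed (use assms in simp)

lemma continuous_on_support_fun:
  assumes "compact C" "C \<noteq> {}" shows "continuous_on UNIV (support_fun C)"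
proof -
  obtain R where "R > 0" "\<forall>x\<in>C. norm x \<le> R"
    using compact_imp_bounded[OF assms(1)] unfolding bounded_pos by blast
  then have "R-lipschitz_on UNIV (support_fun C)"
    by (intro lipschitz_on_support_fun assms) (auto simp: subset_iff)
  then show ?thesis by (rule lipschitz_on_continuous_on)
qed

section \<open>Convex bodies and normal cones\<close>

lemma convex_bodyD:
  assumes "convex_body C"
  shows "compact C" "convex C" "0 \<in> interior C" "0 \<in> C" "C \<noteq> {}" "frontier C \<subseteq> C"
proof -
  show "compact C" "convex C" "0 \<in> interior C" using assms by (auto simp: convex_body_def)
  then show "0 \<in> C" "C \<noteq> {}" "frontier C \<subseteq> C"
    using interior_subset frontier_subset_closed[OF compact_imp_closed] by blast+
qed

lemma convex_body_cball:
  assumes "convex_body C" obtains e where "e > 0" "cball 0 e \<subseteq> C"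
proof -
  obtain e where "e > 0" "ball 0 e \<subseteq> C" using convex_bodyD(3)[OF assms] mem_interior by blast
  then show ?thesis using that[of "e/2"] by (auto simp: subset_iff)
qed

lemma normal_cone_inner_pos:
  assumes "convex_body C" "x \<in> C" "n \<in> normal_cone C x" "n \<noteq> 0" shows "n \<bullet> x > 0"
proof -
  obtain e where e: "e > 0" "cball 0 e \<subseteq> C" using convex_body_cball[OF assms(1)] .
  then have "(e / norm n) *\<^sub>R n \<in> C" using assms(4) by (intro subsetD[OF e(2)]) auto
  then have "n \<bullet> ((e / norm n) *\<^sub>R n - x) \<le> 0" using assms(3) unfolding normal_cone_def by blast
  moreover have "n \<bullet> ((e / norm n) *\<^sub>R n) = e * norm n"
    using assms(4) by (simp add: power2_norm_eq_inner[symmetric] power2_eq_square)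
  moreover have "e * norm n > 0" using e(1) assms(4) by simp
  ultimately show ?thesis by (simp add: inner_diff_right)
qed

lemma support_fun_pos:
  assumes "convex_body C" "v \<noteq> 0" shows "support_fun C v > 0"
proof -
  have C: "compact C" "C \<noteq> {}" using convex_bodyD[OF assms(1)] by auto
  obtain x where x: "x \<in> C" "support_fun C v = v \<bullet> x" using support_fun_attained[OF C] .
  show ?thesis
    using normal_cone_inner_pos[OF assms(1) x(1) normal_cone_support_funI[OF C(1) x] assms(2)] x(2)
      by simp
qed

lemma mu_polar_eq_support_fun:
  assumes "convex_body T" shows "mu_polar T v = support_fun T v"
proof -
  have T: "compact T" "T \<noteq> {}" using convex_bodyD[OF assms] by auto
  define S where "S = {t. t \<ge> 0 \<and> v \<in> (\<lambda>y. t *\<^sub>R y) ` polar T}"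
  have "0 \<in> polar T" by (simp add: polar_def)
  show ?thesis
  proof (cases "v = 0")
    case True
    then have "0 \<in> S" using \<open>0 \<in> polar T\<close> by (force simp: S_def)
    then have "Inf S = 0" by (intro cInf_eq_minimum) (auto simp: S_def)
    then show ?thesis using True support_fun_0[OF T] by (simp add: mu_polar_def S_def)
  next
    case False
    have pos: "support_fun T v > 0" using support_fun_pos[OF assms False] .
    have "S = {support_fun T v..}"
    proof (intro set_eqI iffI)
      fix t assume "t \<in> S"
      then obtain y where t: "t \<ge> 0" "y \<in> polar T" "v = t *\<^sub>R y" by (auto simp: S_def)
      obtain x where x: "x \<in> T" "support_fun T v = v \<bullet> x" using support_fun_attained[OF T] .
      have "v \<bullet> x = t * (x \<bullet> y)" using t(3) by (simp add: inner_commute)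
      also have "\<dots> \<le> t" using t(1,2) x(1) mult_left_mono[of "x \<bullet> y" 1 t] by (auto simp: polar_def)
      finally show "t \<in> {support_fun T v..}" using x by simp
    next
      fix t assume "t \<in> {support_fun T v..}"
      then have t: "t \<ge> support_fun T v" "t > 0" using pos by auto
      have "x \<bullet> (1/t) *\<^sub>R v \<le> 1" if "x \<in> T" for x
        using support_fun_ge[OF T(1) that, of v] t by (simp add: inner_commute field_simps)
      then have "(1/t) *\<^sub>R v \<in> polar T" by (simp add: polar_def)
      moreover have "v = t *\<^sub>R ((1/t) *\<^sub>R v)" using t by simp
      ultimately show "t \<in> S" using t unfolding S_def by force
    qed
    then show ?thesis using pos by (simp add: mu_polar_def S_def[symmetric])
  qed
qed

lemma normal_cone_frontier:
  assumes "x \<in> C" "v \<in> normal_cone C x" "v \<noteq> 0" shows "x \<in> frontier C"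
proof -
  have "x \<notin> interior C"
  proof
    assume "x \<in> interior C"
    then obtain e where e: "e > 0" "ball x e \<subseteq> C" using mem_interior by blast
    define y where "y = x + (e / 2 / norm v) *\<^sub>R v"
    have "y \<in> C" using e assms(3) by (intro subsetD[OF e(2)]) (simp add: y_def dist_norm)
    then have "v \<bullet> (y - x) \<le> 0" using assms(2) by (simp add: normal_cone_def)
    moreover have "v \<bullet> (y - x) = e / 2 * norm v"
      using assms(3) by (simp add: y_def power2_norm_eq_inner[symmetric] power2_eq_square)
    moreover have "e / 2 * norm v > 0" using e(1) assms(3) by simp
    ultimately show False by linarith
  qed
  then show ?thesis using assms(1) closure_subset unfolding frontier_def by blast
qed

lemma strictly_convex_normal_cone_unique:
  assumes "strictly_convex C" "x \<in> C" "y \<in> C" "v \<noteq> 0"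
    "v \<in> normal_cone C x" "v \<in> normal_cone C y"
  shows "x = y"
proof (rule ccontr)
  assume "x \<noteq> y"
  then have "midpoint x y \<in> interior C"
    using assms(1-3) midpoint_in_open_segment[of x y] unfolding strictly_convex_def by blast
  moreover have "v \<in> normal_cone C (midpoint x y)"
    using assms(5,6)
      by (fastforce simp: normal_cone_def midpoint_def inner_diff_right inner_add_right)
  ultimately show False
    using normal_cone_frontier[OF interior_subset[THEN subsetD] _ assms(4)]
      by (simp add: frontier_def)
qed

lemma normal_cone_add: "u \<in> normal_cone C x \<Longrightarrow> v \<in> normal_cone C x \<Longrightarrow> u + v \<in> normal_cone C x"
  unfolding normal_cone_def by (auto simp: inner_add_left intro: add_nonpos_nonpos)

lemma normal_cone_scaleR: "u \<in> normal_cone C x \<Longrightarrow> c \<ge> 0 \<Longrightarrow> c *\<^sub>R u \<in> normal_cone C x"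
  unfolding normal_cone_def by (auto simp: mult_nonneg_nonpos)

lemma closed_Collect_normal_cone:
  assumes "continuous_on UNIV f" "continuous_on UNIV g"
  shows "closed {p. f p \<in> normal_cone C (g p)}"
proof -
  have "{p. f p \<in> normal_cone C (g p)} = (\<Inter>y\<in>C. {p. f p \<bullet> (y - g p) \<le> 0})"
    unfolding normal_cone_def by auto
  then show ?thesis using assms by (auto intro!: closed_Collect_le continuous_intros)
qed

lemma supporting_hyperplane_of_normal:
  assumes "a \<in> normal_cone C z" "a \<noteq> 0" shows "supporting_hyperplane C z {x. a \<bullet> x = a \<bullet> z}"
  unfolding supporting_hyperplane_def using assms
  by (intro exI[of _ a] exI[of _ "a \<bullet> z"]) (auto simp: normal_cone_def inner_diff_right)

text \<open>Both normals define the unique supporting line at \<open>p\<close>; they point the same way because both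
  have positive inner product with \<open>p\<close>.\<close>
lemma smooth_body_normal_cone_parallel:
  assumes "convex_body T" "smooth_body T" "p \<in> frontier T"
    "u \<in> normal_cone T p" "w \<in> normal_cone T p" "u \<noteq> 0" "w \<noteq> 0"
  obtains c where "c > 0" "w = c *\<^sub>R u"
proof -
  have "\<exists>!H. supporting_hyperplane T p H" using assms(2,3) unfolding smooth_body_def by blast
  then have H: "{x. u \<bullet> x = u \<bullet> p} = {x. w \<bullet> x = w \<bullet> p}"
    using supporting_hyperplane_of_normal assms(4-7) by blast
  define c where "c = (w \<bullet> u) / (u \<bullet> u)"
  define z where "z = w - c *\<^sub>R u"
  have zu: "z \<bullet> u = 0" using assms(6) by (simp add: z_def c_def inner_diff_left)
  then have "p + z \<in> {x. u \<bullet> x = u \<bullet> p}" by (simp add: inner_add_right inner_commute)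
  then have "w \<bullet> z = 0" using H by (simp add: inner_add_right)
  then have "z \<bullet> z = 0" using zu by (simp add: z_def inner_diff_left inner_commute)
  then have w: "w = c *\<^sub>R u" by (simp add: z_def)
  have "p \<in> T" using assms(3) convex_bodyD(6)[OF assms(1)] by blast
  then have "0 < u \<bullet> p" "0 < w \<bullet> p"
    using normal_cone_inner_pos[OF assms(1)] assms(4-7) by auto
  then have "c > 0" using w by (simp add: zero_less_mult_iff)
  with w that show thesis by blast
qed

lemma nonsmooth_point_normal_cone:
  assumes "a \<in> frontier K" "\<not> smooth_point K a" "n \<in> normal_cone K a" "n \<noteq> 0"
  obtains w where "w \<in> normal_cone K a" "\<And>c. w \<noteq> c *\<^sub>R n"
proof -
  have sh: "supporting_hyperplane K a {v. n \<bullet> v = n \<bullet> a}"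
    using supporting_hyperplane_of_normal assms(3,4) .
  then obtain H where H: "supporting_hyperplane K a H" "H \<noteq> {v. n \<bullet> v = n \<bullet> a}"
    using assms(1,2) unfolding smooth_point_def by blast
  then obtain w b where w: "w \<noteq> 0" "H = {v. w \<bullet> v = b}" "a \<in> H" "\<forall>v\<in>K. w \<bullet> v \<le> b"
    unfolding supporting_hyperplane_def by blast
  have "w \<in> normal_cone K a" using w by (auto simp: normal_cone_def inner_diff_right)
  moreover have "w \<noteq> c *\<^sub>R n" for c
  proof
    assume "w = c *\<^sub>R n"
    then have "c \<noteq> 0" "H = {v. c * (n \<bullet> v) = c * (n \<bullet> a)}" using w by auto
    then show False using H(2) by simp
  qed
  ultimately show thesis using that by blast
qed

lemma support_points_distinct:
  assumes "convex_body T" "x \<in> T" "z \<in> T" "v \<noteq> 0" "v \<in> normal_cone T x" "- v \<in> normal_cone T z"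
  shows "x \<noteq> z"
  using normal_cone_inner_pos[OF assms(1,2,5,4)] normal_cone_inner_pos[OF assms(1,3,6)] assms(4)
    by auto

lemma support_fun_sum_less:
  assumes "compact C" "strictly_convex C" "finite J" "i \<in> J" "j \<in> J" "x \<in> C" "y \<in> C" "x \<noteq> y"
    "v i \<in> normal_cone C x" "v j \<in> normal_cone C y" "v i \<noteq> 0" "v j \<noteq> 0"
  shows "support_fun C (\<Sum>k\<in>J. v k) < (\<Sum>k\<in>J. support_fun C (v k))"
proof (rule ccontr)
  have ne: "C \<noteq> {}" using assms(6) by blast
  obtain P where P: "P \<in> C" "support_fun C (\<Sum>k\<in>J. v k) = (\<Sum>k\<in>J. v k \<bullet> P)"
    using support_fun_attained[OF assms(1) ne] by (metis inner_sum_left)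
  have le: "0 \<le> support_fun C (v k) - v k \<bullet> P" for k using support_fun_ge[OF assms(1) P(1)] by simp
  assume "\<not> support_fun C (\<Sum>k\<in>J. v k) < (\<Sum>k\<in>J. support_fun C (v k))"
  then have "(\<Sum>k\<in>J. support_fun C (v k) - v k \<bullet> P) = 0"
    using P(2) support_fun_sum_le[OF assms(1) ne assms(3), of v] by (simp add: sum_subtractf)
  then have "support_fun C (v k) - v k \<bullet> P = 0" if "k \<in> J" for k
    using sum_nonneg_eq_0_iff[OF assms(3), of "\<lambda>k. support_fun C (v k) - v k \<bullet> P"] le that by blast
  then have "support_fun C (v k) = v k \<bullet> P" if "k \<in> J" for k using that by simp
  then have "v i \<in> normal_cone C P" "v j \<in> normal_cone C P"
    using assms(4,5) normal_cone_support_funI[OF assms(1) P(1)] by auto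
  then have "P = x" "P = y"
    using strictly_convex_normal_cone_unique[OF assms(2) P(1)] assms(6,7,9-12) by blast+
  with assms(8) show False by simp
qed

lemma strictly_convex_frontier_not_collinear:
  assumes "strictly_convex C" "closed C" "x \<in> frontier C" "y \<in> frontier C" "z \<in> frontier C"
    "x \<noteq> y" "y \<noteq> z" "z \<noteq> x"
  shows "\<not> collinear {x, y, z}"
proof
  assume "collinear {x, y, z}"
  then have "x \<in> open_segment y z \<or> y \<in> open_segment z x \<or> z \<in> open_segment x y"
    using collinear_between_cases[of x y z] assms(6-8)
      by (auto simp: between_mem_segment open_segment_def)
  moreover have "x \<in> C" "y \<in> C" "z \<in> C" using assms(2-5) frontier_subset_closed by auto
  ultimately have "x \<in> interior C \<or> y \<in> interior C \<or> z \<in> interior C"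
    using assms(1,6-8) unfolding strictly_convex_def by blast
  then show False using assms(3-5) by (auto simp: frontier_def)
qed

lemma interior_scaleR_expand:
  fixes z :: "'a::real_normed_vector"
  assumes "z \<in> interior C" shows "\<forall>\<^sub>F l in at_right 0. (1 + l) *\<^sub>R z \<in> C"
proof -
  have "((\<lambda>l. (1 + l) *\<^sub>R z) \<longlongrightarrow> (1 + 0) *\<^sub>R z) (at_right 0)"
    by (intro tendsto_intros)
  then have "\<forall>\<^sub>F l in at_right 0. (1 + l) *\<^sub>R z \<in> interior C"
    using assms by (intro topological_tendstoD) auto
  then show ?thesis by eventually_elim (use interior_subset in blast)
qed

section \<open>Linear algebra in the plane\<close>

lemma closed_segment_of_parallel:
  fixes u v w :: "'a::real_vector"
  assumes "k > 0" "u - w = k *\<^sub>R (w - v)" shows "w \<in> closed_segment v u"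
proof -
  have "(1 + k) *\<^sub>R w = u + k *\<^sub>R v" using assms(2) by (simp add: algebra_simps)
  then have "w = (1 / (1 + k)) *\<^sub>R (u + k *\<^sub>R v)" using assms(1)
    by (metis add_pos_pos less_irrefl scaleR_one scaleR_scaleR zero_less_one divide_self_if
        times_divide_eq_left mult_1)
  then have "w = (1 - 1 / (1 + k)) *\<^sub>R v + (1 / (1 + k)) *\<^sub>R u" using assms(1)
    by (simp add: algebra_simps divide_simps)
  moreover have "0 \<le> 1 / (1 + k)" "1 / (1 + k) \<le> 1" using assms(1) by auto
  ultimately show ?thesis unfolding in_segment by blast
qed

lemma caratheodory_indexed:
  fixes v :: "'b \<Rightarrow> 'a::euclidean_space"
  assumes "x \<in> convex hull (v ` A)"
  obtains I d where "I \<subseteq> A" "finite I" "card I \<le> DIM('a) + 1" "\<And>i. i \<in> I \<Longrightarrow> 0 \<le> d i"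
    "sum d I = 1" "(\<Sum>i\<in>I. d i *\<^sub>R v i) = x"
proof -
  obtain S where S: "finite S" "S \<subseteq> v ` A" "card S \<le> DIM('a) + 1" "x \<in> convex hull S"
    using caratheodory[of "v ` A"] assms by auto
  obtain I where I: "I \<subseteq> A" "inj_on v I" "S = v ` I" using S(2) subset_image_inj by metis
  obtain u where u: "\<forall>y\<in>S. 0 \<le> u y" "sum u S = 1" "(\<Sum>y\<in>S. u y *\<^sub>R y) = x"
    using S(4) convex_hull_finite[OF S(1)] by auto
  show thesis
  proof (rule that[of I "u \<circ> v"])
    show "finite I" "card I \<le> DIM('a) + 1" using I S(1,3) by (auto simp: card_image finite_image_iff)
    show "sum (u \<circ> v) I = 1" "(\<Sum>i\<in>I. (u \<circ> v) i *\<^sub>R v i) = x"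
      using u(2,3) unfolding I(3) sum.reindex[OF I(2)] by simp_all
  qed (use I u(1) in auto)
qed

lemma zero_convex_combination_three:
  fixes v :: "nat \<Rightarrow> pt"
  assumes "0 \<in> convex hull (v ` {..<m})" "\<And>i. i < m \<Longrightarrow> v i \<noteq> 0"
  obtains i1 i2 i3 c1 c2 c3 where "i1 < i2" "i2 \<le> i3" "i3 < m" "c1 \<ge> 0" "c2 \<ge> 0" "c3 \<ge> 0"
    "c1 *\<^sub>R v i1 + c2 *\<^sub>R v i2 + c3 *\<^sub>R v i3 = 0" "c1 > 0 \<or> c2 > 0 \<or> c3 > 0"
proof -
  obtain I d where I: "I \<subseteq> {..<m}" and fI: "finite I" and "card I \<le> DIM(pt) + 1"
    and d: "\<And>i. i \<in> I \<Longrightarrow> 0 \<le> d i" "(\<Sum>i\<in>I. d i) = 1" "(\<Sum>i\<in>I. d i *\<^sub>R v i) = 0"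
    using caratheodory_indexed[OF assms(1)] by blast
  then have cI: "card I \<le> 3" by simp
  define i1 i3 where "i1 = Min I" "i3 = Max I"
  have "I \<noteq> {}" using d(2) by auto
  then have i13: "i1 \<in> I" "i3 \<in> I" "\<And>i. i \<in> I \<Longrightarrow> i1 \<le> i \<and> i \<le> i3"
    using fI by (auto simp: i1_i3_def)
  have "i1 \<noteq> i3"
  proof
    assume "i1 = i3"
    then have "I = {i1}" using i13 by fastforce
    then show False using d(2,3) assms(2) I by auto
  qed
  have "card (I - {i1, i3}) \<le> 1" using cI \<open>i1 \<noteq> i3\<close> i13 fI by (simp add: card_Diff_subset)
  then have "\<forall>a\<in>I - {i1, i3}. \<forall>b\<in>I - {i1, i3}. a = b"
    using card_le_Suc0_iff_eq[of "I - {i1, i3}"] fI by (metis One_nat_def finite_Diff)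
  then obtain i2 where i2: "i2 \<in> I" "i1 < i2" "I = {i1, i2, i3}"
  proof (cases "I - {i1, i3} = {}")
    case True
    then show thesis using that[of i3] i13 \<open>i1 \<noteq> i3\<close> by fastforce
  next
    case False
    then obtain j where j: "j \<in> I - {i1, i3}" by blast
    then have "I = {i1, j, i3}" using \<open>\<forall>a\<in>I - {i1, i3}. \<forall>b\<in>I - {i1, i3}. a = b\<close> i13 by blast
    with j show thesis using that[of j] i13(3)[of j] by fastforce
  qed
  define c2 where "c2 = (if i2 = i3 then 0 else d i2)"
  show thesis
  proof (rule that[of i1 i2 i3 "d i1" c2 "d i3"])
    show "i1 < i2" "i2 \<le> i3" "i3 < m" using i13 i2 I by auto
    show "0 \<le> d i1" "0 \<le> c2" "0 \<le> d i3" using d(1) i13 i2 by (auto simp: c2_def)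
    show "d i1 *\<^sub>R v i1 + c2 *\<^sub>R v i2 + d i3 *\<^sub>R v i3 = 0"
      using d(3) \<open>i1 \<noteq> i3\<close> i2(2) unfolding i2(3) c2_def by (auto simp: algebra_simps)
    show "0 < d i1 \<or> 0 < c2 \<or> 0 < d i3"
      using d(1,2) \<open>i1 \<noteq> i3\<close> i2(2) unfolding i2(3) c2_def by (auto split: if_splits)
  qed
qed

lemma collinear_scaleR_0:
  fixes u v :: "'a::real_vector"
  assumes "collinear {0, u, v}" "a \<noteq> 0" shows "collinear {0, a *\<^sub>R u, b *\<^sub>R v}"
proof -
  consider "u = 0" | "v = 0" | c where "v = c *\<^sub>R u" using assms(1) by (auto simp: collinear_lemma)
  then show ?thesis
  proof cases
    case 3
    then have "b *\<^sub>R v = (b * c / a) *\<^sub>R (a *\<^sub>R u)" using assms(2) by simp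
    then show ?thesis unfolding collinear_lemma by blast
  qed (simp_all add: collinear_lemma)
qed

lemma dim_pair_eq_2:
  fixes u v :: pt
  assumes "\<not> collinear {0, u, v}" shows "dim {u, v} = 2"
proof -
  have u: "u \<noteq> 0" and v: "v \<noteq> 0" and uv: "\<And>c. v \<noteq> c *\<^sub>R u" using assms by (auto simp: collinear_lemma)
  have "u \<notin> span {v}"
  proof
    assume "u \<in> span {v}"
    then obtain k where "u = k *\<^sub>R v" by (auto simp: span_singleton)
    then show False using u uv[of "1 / k"] by (cases "k = 0") auto
  qed
  then show ?thesis using v by (simp add: dim_insert)
qed

lemma span_pair_UNIV:
  fixes u v :: pt
  assumes "\<not> collinear {0, u, v}" shows "span {u, v} = UNIV"
  using dim_pair_eq_2[OF assms] dim_eq_full[of "{u, v}"] by simp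

lemma not_collinear_decompose:
  fixes u v w :: pt
  assumes "\<not> collinear {0, u, v}" obtains s t where "w = s *\<^sub>R u + t *\<^sub>R v"
proof -
  have "w \<in> span {u, v}" using span_pair_UNIV[OF assms] by simp
  then obtain s where "w - s *\<^sub>R u \<in> span {v}" using span_breakdown_eq by blast
  then obtain t where "w - s *\<^sub>R u = t *\<^sub>R v" by (auto simp: span_singleton)
  then show thesis using that[of s t] by (simp add: algebra_simps)
qed

lemma not_collinear_edges:
  fixes x y z :: pt
  assumes "\<not> collinear {x, y, z}" shows "\<not> collinear {0, x - y, y - z}"
  using assms collinear_3[of x y z]
    by (auto simp: collinear_lemma) (metis minus_diff_eq scaleR_minus_left)+

lemma convex_cone_sum_mem:
  assumes "convex_cone C" "\<And>i. i \<in> I \<Longrightarrow> f i \<in> C" shows "sum f I \<in> C"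
proof (cases "finite I")
  case True then show ?thesis using assms(2)
    by (induction I) (auto intro: convex_cone_add[OF assms(1)] convex_cone_contains_0[OF assms(1)])
qed (simp add: convex_cone_contains_0[OF assms(1)])

lemma neg_mem_convex_cone_hull:
  assumes "finite I" "\<And>i. i \<in> I \<Longrightarrow> \<mu> i > 0" "(\<Sum>i\<in>I. \<mu> i *\<^sub>R v i) = 0" "j \<in> I"
  shows "- v j \<in> convex_cone hull (v ` I)"
proof -
  have "\<mu> j *\<^sub>R v j + (\<Sum>i\<in>I - {j}. \<mu> i *\<^sub>R v i) = 0"
    using assms(3) sum.remove[OF assms(1,4), of "\<lambda>i. \<mu> i *\<^sub>R v i"] by simp
  then have "(\<Sum>i\<in>I - {j}. \<mu> i *\<^sub>R v i) = - (\<mu> j *\<^sub>R v j)"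
    by (simp add: eq_neg_iff_add_eq_0 add.commute)
  then have "- v j = (1 / \<mu> j) *\<^sub>R (\<Sum>i\<in>I - {j}. \<mu> i *\<^sub>R v i)"
    using assms(2)[OF assms(4)] by simp
  also have "\<dots> = (\<Sum>i\<in>I - {j}. (\<mu> i / \<mu> j) *\<^sub>R v i)" by (simp add: scaleR_sum_right)
  also have "\<dots> \<in> convex_cone hull (v ` I)"
    using assms(2) assms(2)[OF assms(4)]
    by (intro convex_cone_sum_mem convex_cone_convex_cone_hull convex_cone_scaleR)
      (auto intro: hull_inc less_imp_le)
  finally show ?thesis .
qed

lemma convex_cone_hull_subspace:
  assumes "\<And>x. x \<in> S \<Longrightarrow> - x \<in> convex_cone hull S"
  shows "subspace (convex_cone hull S)" "convex_cone hull S = span S"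
proof -
  define M where "M = {x \<in> convex_cone hull S. - x \<in> convex_cone hull S}"
  have "convex_cone M"
    using convex_cone_convex_cone_hull[of S] unfolding M_def convex_cone_iff
    by (auto simp: scaleR_minus_right[symmetric] simp del: scaleR_minus_right)
  moreover have "S \<subseteq> M" using assms by (auto simp: M_def intro: hull_inc)
  ultimately have "convex_cone hull S \<subseteq> M" by (rule hull_minimal[rotated])
  then show sub: "subspace (convex_cone hull S)"
    using convex_cone_convex_cone_hull subspace_convex_cone_symmetric by (auto simp: M_def)
  show "convex_cone hull S = span S"
    using sub by (intro antisym hull_minimal span_minimal convex_cone_span)
      (auto intro: hull_inc span_base)
qed

lemma aff_dim_minimal_affine_section:
  assumes K: "convex_body K" and V: "minimal_affine_section K q V" and q: "aff_dim (set q) \<ge> 1"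
  shows "aff_dim V = aff_dim (set q)"
proof -
  have aV: "affine V" and sub: "set q \<subseteq> K \<inter> V"
    and min: "K \<inter> V \<subseteq> K \<inter> affine hull (set q)"
    using V hull_subset[of "set q" affine] unfolding minimal_affine_section_def by auto
  have "aff_dim (set q) \<le> aff_dim V" using sub by (intro aff_dim_subset) auto
  moreover have "aff_dim V \<le> 2" using aff_dim_le_DIM[of V] by simp
  moreover have "aff_dim V \<noteq> 2" if "aff_dim (set q) = 1"
  proof
    assume "aff_dim V = 2"
    then have "V = UNIV" using aff_dim_eq_full[of V] affine_hull_eq[of V] aV by simp
    then have "aff_dim K \<le> aff_dim (affine hull (set q))" using min by (intro aff_dim_subset) auto
    moreover have "aff_dim K = 2"
      using aff_dim_nonempty_interior[of K] convex_bodyD(3)[OF K] by auto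
    ultimately show False using that by simp
  qed
  moreover have "aff_dim (set q) \<le> 2" using aff_dim_le_DIM[of "set q"] by simp
  ultimately show ?thesis using q by linarith
qed

section \<open>Normally balanced triangles\<close>

definition triangle_length :: "'a::real_inner set \<Rightarrow> 'a \<Rightarrow> 'a \<Rightarrow> 'a \<Rightarrow> real" where
  "triangle_length C a b c = support_fun C (b - a) + support_fun C (c - b) + support_fun C (a - c)"

definition triangle_pairing :: "'a::real_inner \<Rightarrow> 'a \<Rightarrow> 'a \<Rightarrow> 'a \<Rightarrow> 'a \<Rightarrow> 'a \<Rightarrow> real" where
  "triangle_pairing a b c x y z = (b - a) \<bullet> x + (c - b) \<bullet> y + (a - c) \<bullet> z"

text \<open>Triangles \<open>(a, b, c)\<close> in \<open>C\<close> that cannot be translated into the interior of \<open>C\<close>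
  (the class \<open>F_3(C)\<close> of the paper), in their normal cone characterisation.\<close>
definition normal_balanced :: "pt set \<Rightarrow> pt \<Rightarrow> pt \<Rightarrow> pt \<Rightarrow> bool" where
  "normal_balanced C a b c \<longleftrightarrow> a \<in> C \<and> b \<in> C \<and> c \<in> C \<and>
    (\<exists>na nb nc. na \<in> normal_cone C a \<and> nb \<in> normal_cone C b \<and> nc \<in> normal_cone C c \<and>
       na + nb + nc = 0 \<and> (na \<noteq> 0 \<or> nb \<noteq> 0 \<or> nc \<noteq> 0))"

lemma triangle_length_rotate: "triangle_length C b c a = triangle_length C a b c"
  by (simp add: triangle_length_def)

lemma triangle_pairing_dual: "triangle_pairing a b c x y z = triangle_pairing x z y a c b"
  by (simp add: triangle_pairing_def inner_diff_left inner_diff_right inner_commute)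

lemma triangle_pairing_le_length:
  assumes "compact C" "x \<in> C" "y \<in> C" "z \<in> C"
  shows "triangle_pairing a b c x y z \<le> triangle_length C a b c"
  using support_fun_ge[OF assms(1,2), of "b - a"] support_fun_ge[OF assms(1,3), of "c - b"]
    support_fun_ge[OF assms(1,4), of "a - c"]
  by (simp add: triangle_pairing_def triangle_length_def)

lemma triangle_length_eq_pairing:
  assumes "compact C" "x \<in> C" "y \<in> C" "z \<in> C"
    "b - a \<in> normal_cone C x" "c - b \<in> normal_cone C y" "a - c \<in> normal_cone C z"
  shows "triangle_length C a b c = triangle_pairing a b c x y z"
  using assms support_fun_normal_cone[OF assms(1)]
  by (simp add: triangle_length_def triangle_pairing_def)

lemma triangle_pairing_less_length:
  assumes C: "compact C" "strictly_convex C" and xyz: "x \<in> C" "y \<in> C" "z \<in> C"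
    and n: "b - a \<in> normal_cone C x" "c - b \<in> normal_cone C y" "a - c \<in> normal_cone C z"
    and x'z': "x' \<in> C" "y' \<in> C" "z' \<in> C" "x' \<noteq> x \<or> z' \<noteq> z" and "a \<noteq> b" "c \<noteq> a"
  shows "triangle_pairing a b c x' y' z' < triangle_length C a b c"
proof -
  have "(b - a) \<bullet> x' \<le> (b - a) \<bullet> x" "(c - b) \<bullet> y' \<le> (c - b) \<bullet> y" "(a - c) \<bullet> z' \<le> (a - c) \<bullet> z"
    using support_fun_ge[OF C(1) x'z'(1)] support_fun_ge[OF C(1) x'z'(2)]
      support_fun_ge[OF C(1) x'z'(3)]
      support_fun_normal_cone[OF C(1)] xyz n by metis+
  moreover have "(b - a) \<bullet> x' \<noteq> (b - a) \<bullet> x \<or> (a - c) \<bullet> z' \<noteq> (a - c) \<bullet> z"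
    using strictly_convex_normal_cone_unique[OF C(2)] normal_cone_support_funI[OF C(1)]
      support_fun_normal_cone[OF C(1)] xyz n x'z' assms(13,14) by (metis eq_iff_diff_eq_0)
  ultimately show ?thesis
    using triangle_length_eq_pairing[OF C(1) xyz n] unfolding triangle_pairing_def by linarith
qed

lemma continuous_on_triangle_length:
  assumes "compact T" "T \<noteq> {}" "continuous_on S f" "continuous_on S g" "continuous_on S h"
  shows "continuous_on S (\<lambda>p. triangle_length T (f p) (g p) (h p))"
proof -
  have sf: "continuous_on S (\<lambda>p. support_fun T (k p))" if "continuous_on S k" for k
    using continuous_on_compose2[OF continuous_on_support_fun[OF assms(1,2)] that] by simp
  show ?thesis unfolding triangle_length_def
    by (intro continuous_on_add sf continuous_intros assms(3-5))
qed

lemma normal_balanced_swap: "normal_balanced C a b c \<Longrightarrow> normal_balanced C a c b"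
  unfolding normal_balanced_def by (metis add.commute add.left_commute)

lemma normal_balanced_not_constant:
  assumes "convex_body C" shows "\<not> normal_balanced C a a a"
proof
  assume "normal_balanced C a a a"
  then obtain na nb nc where n: "na \<in> normal_cone C a" "nb \<in> normal_cone C a" "nc \<in> normal_cone C a"
    "na + nb + nc = 0" "na \<noteq> 0 \<or> nb \<noteq> 0 \<or> nc \<noteq> 0" and a: "a \<in> C"
    unfolding normal_balanced_def by blast
  have gt: "w \<bullet> a > 0" if "w \<in> normal_cone C a" "w \<noteq> 0" for w
    using normal_cone_inner_pos[OF assms a that] .
  have ge: "w \<bullet> a \<ge> 0" if "w \<in> normal_cone C a" for w
    using gt[OF that] by (cases "w = 0") auto
  have "na \<bullet> a + nb \<bullet> a + nc \<bullet> a = 0" using n(4) by (metis inner_add_left inner_zero_left)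
  then show False using n ge[OF n(1)] ge[OF n(2)] ge[OF n(3)] gt[OF n(1)] gt[OF n(2)] gt[OF n(3)]
    by (elim disjE) linarith+
qed

lemma untranslatable_separation:
  assumes C: "convex_body C"
    and nt: "\<not> (\<exists>t. x0 + t \<in> interior C \<and> x1 + t \<in> interior C \<and> x2 + t \<in> interior C)"
  obtains n0 n1 n2 where "n0 \<noteq> 0 \<or> n1 \<noteq> 0 \<or> n2 \<noteq> 0" "n0 + n1 + n2 = 0"
    "\<And>y0 y1 y2. y0 \<in> interior C \<Longrightarrow> y1 \<in> interior C \<Longrightarrow> y2 \<in> interior C \<Longrightarrow>
       n0 \<bullet> (y0 - x0) + n1 \<bullet> (y1 - x1) + n2 \<bullet> (y2 - x2) \<le> 0"
proof -
  define A where "A = ((\<lambda>y. y - x0) ` interior C) \<times> ((\<lambda>y. y - x1) ` interior C) \<times>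
    ((\<lambda>y. y - x2) ` interior C)"
  define D where "D = range (\<lambda>t::pt. (t, t, t))"
  have "convex (interior C)" using convex_bodyD(2)[OF C] convex_interior by blast
  then have "convex A" unfolding A_def by (intro convex_Times convex_translation_subtract)
  moreover have "convex D" unfolding D_def
    by (rule convexI) (auto intro!: image_eqI[of _ "\<lambda>t. (t, t, t)"])
  moreover have "A \<noteq> {}" "D \<noteq> {}" using convex_bodyD(3)[OF C] by (auto simp: A_def D_def)
  moreover have "A \<inter> D = {}"
  proof -
    have "x0 + t \<in> interior C \<and> x1 + t \<in> interior C \<and> x2 + t \<in> interior C" if "(t, t, t) \<in> A" for t
      using that by (auto simp: A_def algebra_simps)
    then show ?thesis using nt by (auto simp: D_def)
  qed
  ultimately obtain a b where ab: "a \<noteq> 0" "\<forall>v\<in>A. a \<bullet> v \<le> b" "\<forall>v\<in>D. a \<bullet> v \<ge> b"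
    using separating_hyperplane_sets by metis
  obtain n0 n1 n2 where a: "a = (n0, n1, n2)" by (cases a) auto
  have diag: "(n0 + n1 + n2) \<bullet> t \<ge> b" for t
    using ab(3) a unfolding D_def by (auto simp: inner_add_left add.assoc)
  have "n0 + n1 + n2 = 0"
  proof (rule ccontr)
    assume "n0 + n1 + n2 \<noteq> 0"
    then show False
      using diag[of "(- (\<bar>b\<bar> + 1) / ((n0 + n1 + n2) \<bullet> (n0 + n1 + n2))) *\<^sub>R (n0 + n1 + n2)"]
      by simp
  qed
  moreover have "n0 \<bullet> (y0 - x0) + n1 \<bullet> (y1 - x1) + n2 \<bullet> (y2 - x2) \<le> 0"
    if "y0 \<in> interior C" "y1 \<in> interior C" "y2 \<in> interior C" for y0 y1 y2
    using ab(2) a diag[of 0] that by (fastforce simp: A_def)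
  moreover have "n0 \<noteq> 0 \<or> n1 \<noteq> 0 \<or> n2 \<noteq> 0" using ab(1) a by (auto simp: zero_prod_def)
  ultimately show ?thesis using that by blast
qed

text \<open>The separating inequality extends from the interior to all of \<open>C\<close> by continuity; putting
  two of the three points at their base points then exhibits the three normals.\<close>
lemma normal_balanced_if_untranslatable:
  assumes C: "convex_body C" and x: "x0 \<in> C" "x1 \<in> C" "x2 \<in> C"
    and nt: "\<not> (\<exists>t. x0 + t \<in> interior C \<and> x1 + t \<in> interior C \<and> x2 + t \<in> interior C)"
  shows "normal_balanced C x0 x1 x2"
proof -
  obtain n0 n1 n2 where n: "n0 \<noteq> 0 \<or> n1 \<noteq> 0 \<or> n2 \<noteq> 0" "n0 + n1 + n2 = 0"
    and le: "\<And>y0 y1 y2. y0 \<in> interior C \<Longrightarrow> y1 \<in> interior C \<Longrightarrow> y2 \<in> interior C \<Longrightarrow>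
       n0 \<bullet> (y0 - x0) + n1 \<bullet> (y1 - x1) + n2 \<bullet> (y2 - x2) \<le> 0"
    using untranslatable_separation[OF C nt] by blast
  define P where "P = {y. n0 \<bullet> (fst y - x0) + n1 \<bullet> (fst (snd y) - x1) + n2 \<bullet> (snd (snd y) - x2) \<le> 0}"
  have "closed P" unfolding P_def by (intro closed_Collect_le continuous_intros)
  moreover have "interior C \<times> interior C \<times> interior C \<subseteq> P" using le by (auto simp: P_def)
  ultimately have "closure (interior C \<times> interior C \<times> interior C) \<subseteq> P"
    by (rule closure_minimal[rotated])
  moreover have "closure (interior C) = C"
    using convex_closure_interior[of C] convex_bodyD[OF C] compact_imp_closed closure_closed by blast
  ultimately have le': "n0 \<bullet> (y0 - x0) + n1 \<bullet> (y1 - x1) + n2 \<bullet> (y2 - x2) \<le> 0"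
    if "y0 \<in> C" "y1 \<in> C" "y2 \<in> C" for y0 y1 y2
    using that subsetD[of _ P "(y0, y1, y2)"] by (auto simp: P_def closure_Times)
  have "n0 \<in> normal_cone C x0" "n1 \<in> normal_cone C x1" "n2 \<in> normal_cone C x2"
    using le'[OF _ x(2,3)] le'[OF x(1) _ x(3)] le'[OF x(1,2)] by (auto simp: normal_cone_def)
  then show ?thesis using x n unfolding normal_balanced_def by blast
qed

lemma maximal_scaled_triangle:
  assumes C: "convex_body C" and u: "u0 \<noteq> 0 \<or> u1 \<noteq> 0 \<or> u2 \<noteq> 0" "u0 + u1 + u2 = 0"
  defines "S \<equiv> {p :: real \<times> pt. 0 \<le> fst p \<and> snd p \<in> C \<and> snd p + fst p *\<^sub>R u0 \<in> C \<and>
    snd p - fst p *\<^sub>R u2 \<in> C}"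
  obtains c s where "(c, s) \<in> S" "c > 0" "\<And>c' s'. (c', s') \<in> S \<Longrightarrow> c' \<le> c"
proof -
  have cC: "compact C" using convex_bodyD[OF C] by blast
  define N where "N = norm u0 + norm u1 + norm u2"
  have N: "N > 0" using u(1) by (auto simp: N_def add_pos_nonneg add_nonneg_pos)
  have "c * N \<le> 3 * diameter C" if "(c, s) \<in> S" for c s
  proof -
    have "norm (c *\<^sub>R u) \<le> diameter C" if "x \<in> C" "y \<in> C" "c *\<^sub>R u = x - y" for u x y
      using diameter_bounded_bound[OF compact_imp_bounded[OF cC] that(1,2)] that(3)
        by (simp add: dist_norm)
    moreover have "c *\<^sub>R u1 = (s - c *\<^sub>R u2) - (s + c *\<^sub>R u0)"
      using u(2) by (simp add: algebra_simps flip: scaleR_add_right add_eq_0_iff)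
    ultimately have "norm (c *\<^sub>R u0) \<le> diameter C" "norm (c *\<^sub>R u1) \<le> diameter C"
      "norm (c *\<^sub>R u2) \<le> diameter C"
      using that by (fastforce simp: S_def)+
    then show ?thesis using that by (simp add: S_def N_def distrib_left)
  qed
  then have "S \<subseteq> {0 .. 3 * diameter C / N} \<times> C"
    using N by (fastforce simp: S_def pos_le_divide_eq)
  then have "bounded S"
    by (rule bounded_subset[rotated])
      (intro bounded_Times bounded_closed_interval compact_imp_bounded cC)
  moreover have "closed S" unfolding S_def
    by (intro closed_Collect_conj closed_Collect_le closed_vimage[of C, unfolded vimage_def]
        compact_imp_closed cC continuous_intros)
  moreover have "(0, 0) \<in> S" using convex_bodyD(4)[OF C] by (simp add: S_def)
  ultimately obtain p where p: "p \<in> S" "\<And>p'. p' \<in> S \<Longrightarrow> fst p' \<le> fst p"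
    using continuous_attains_sup[of S fst] continuous_on_fst[OF continuous_on_id]
    by (metis compact_eq_bounded_closed empty_iff)
  obtain e where e: "e > 0" "cball 0 e \<subseteq> C" using convex_body_cball[OF C] .
  define d where "d = e / (norm u0 + norm u2 + 1)"
  have D: "norm u0 + norm u2 + 1 > 0" by (simp add: add_nonneg_pos)
  have "d > 0" using e(1) D by (simp add: d_def)
  moreover have "d * norm u0 \<le> e" "d * norm u2 \<le> e"
    using e(1) D by (simp_all add: d_def pos_divide_le_eq mult_left_mono)
  ultimately have "(d, 0) \<in> S" using e(2) convex_bodyD(4)[OF C] by (auto simp: S_def subset_iff)
  then have "fst p > 0" using p(2) \<open>d > 0\<close> by fastforce
  with p that show thesis by (metis prod.collapse fst_conv)
qed

text \<open>A largest homothetic copy of the triangle inside \<open>C\<close> cannot be translated into the interior,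
  since such a translate could be enlarged further.\<close>
lemma normal_balanced_triangle_with_edges:
  assumes C: "convex_body C" and u: "u0 + u1 + u2 = 0" "u0 \<noteq> 0 \<or> u1 \<noteq> 0 \<or> u2 \<noteq> 0"
  obtains c x0 x1 x2 where "c > 0" "x1 - x0 = c *\<^sub>R u0" "x2 - x1 = c *\<^sub>R u1" "x0 - x2 = c *\<^sub>R u2"
    "normal_balanced C x0 x1 x2"
proof -
  define S where "S = {p :: real \<times> pt. 0 \<le> fst p \<and> snd p \<in> C \<and> snd p + fst p *\<^sub>R u0 \<in> C \<and>
    snd p - fst p *\<^sub>R u2 \<in> C}"
  obtain c s where cs: "(c, s) \<in> S" "c > 0" and cmax: "\<And>c' s'. (c', s') \<in> S \<Longrightarrow> c' \<le> c"
    using maximal_scaled_triangle[OF C u(2,1)] unfolding S_def by blast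
  define x0 x1 x2 where "x0 = s" "x1 = s + c *\<^sub>R u0" "x2 = s - c *\<^sub>R u2"
  have "\<not> (\<exists>t. x0 + t \<in> interior C \<and> x1 + t \<in> interior C \<and> x2 + t \<in> interior C)"
  proof
    assume "\<exists>t. x0 + t \<in> interior C \<and> x1 + t \<in> interior C \<and> x2 + t \<in> interior C"
    then obtain t where "x0 + t \<in> interior C" "x1 + t \<in> interior C" "x2 + t \<in> interior C" by blast
    then have "\<forall>\<^sub>F l in at_right 0. 0 < l \<and> (1 + l) *\<^sub>R (x0 + t) \<in> C \<and> (1 + l) *\<^sub>R (x1 + t) \<in> C \<and>
        (1 + l) *\<^sub>R (x2 + t) \<in> C"
      by (intro eventually_conj eventually_at_right_less interior_scaleR_expand)
    then obtain l where l: "0 < l" "(1 + l) *\<^sub>R (x0 + t) \<in> C" "(1 + l) *\<^sub>R (x1 + t) \<in> C"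
        "(1 + l) *\<^sub>R (x2 + t) \<in> C"
      using eventually_happens' trivial_limit_at_right_real by blast
    then have "((1 + l) * c, (1 + l) *\<^sub>R (s + t)) \<in> S"
      using cs(2) by (simp add: S_def x0_x1_x2_def algebra_simps)
    then show False using cmax l(1) cs(2) by fastforce
  qed
  then have "normal_balanced C x0 x1 x2"
    using cs(1) by (intro normal_balanced_if_untranslatable[OF C]) (auto simp: S_def x0_x1_x2_def)
  moreover have "c *\<^sub>R u1 = (s - c *\<^sub>R u2) - (s + c *\<^sub>R u0)"
    using u(1) by (simp add: algebra_simps flip: scaleR_add_right add_eq_0_iff)
  ultimately show thesis
    using that[OF cs(2), of x1 x0 x2] by (simp add: x0_x1_x2_def algebra_simps)
qed

text \<open>The normals of \<open>D\<close> at \<open>x, y, z\<close> become the edge vectors of the triangle in \<open>C\<close>.\<close>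
lemma normal_balanced_dual:
  assumes C: "convex_body C" and D: "compact D" and nb: "normal_balanced D x y z"
  obtains a b c where "normal_balanced C a b c"
    "triangle_length D a b c = triangle_pairing a b c x y z"
proof -
  obtain mx my mz where m: "mx \<in> normal_cone D x" "my \<in> normal_cone D y" "mz \<in> normal_cone D z"
    "mx + my + mz = 0" "mx \<noteq> 0 \<or> my \<noteq> 0 \<or> mz \<noteq> 0" and xyz: "x \<in> D" "y \<in> D" "z \<in> D"
    using nb unfolding normal_balanced_def by blast
  obtain k a b c where k: "k > 0" "b - a = k *\<^sub>R mx" "c - b = k *\<^sub>R my" "a - c = k *\<^sub>R mz"
    "normal_balanced C a b c"
    using normal_balanced_triangle_with_edges[OF C m(4,5)] .
  have "triangle_length D a b c = triangle_pairing a b c x y z"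
    using k(1) by (intro triangle_length_eq_pairing[OF D xyz])
      (simp_all add: k(2-4) normal_cone_scaleR m)
  with k(5) that show thesis by blast
qed

lemma normal_balanced_dual_rev:
  assumes C: "convex_body C" and D: "compact D" and nb: "normal_balanced D a b c"
  obtains x y z where "normal_balanced C x y z"
    "triangle_length D x z y = triangle_pairing a b c x y z"
proof -
  obtain x z y where "normal_balanced C x z y"
    "triangle_length D x z y = triangle_pairing x z y a c b"
    using normal_balanced_dual[OF C D normal_balanced_swap[OF nb]] .
  then show thesis using that[OF normal_balanced_swap] by (simp add: triangle_pairing_dual)
qed

lemma normal_balanced_dual_le:
  assumes C: "convex_body C" and D: "compact D" and nb: "normal_balanced D x y z"
  obtains a b c where "normal_balanced C a b c" "triangle_length D a b c \<le> triangle_length C x z y"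
proof -
  obtain a b c where abc: "normal_balanced C a b c"
    "triangle_length D a b c = triangle_pairing a b c x y z"
    using normal_balanced_dual[OF C D nb] .
  have "a \<in> C" "b \<in> C" "c \<in> C" using abc(1) by (auto simp: normal_balanced_def)
  then have "triangle_pairing a b c x y z \<le> triangle_length C x z y"
    unfolding triangle_pairing_dual[of a b c]
      by (intro triangle_pairing_le_length convex_bodyD(1)[OF C])
  with abc that show thesis by simp
qed

lemma normal_balanced_normalized:
  assumes "normal_balanced C a b c"
  obtains na nb nc where "na \<in> normal_cone C a" "nb \<in> normal_cone C b" "nc \<in> normal_cone C c"
    "na + nb + nc = 0" "norm na + norm nb + norm nc = 1"
proof -
  obtain na nb nc where n: "na \<in> normal_cone C a" "nb \<in> normal_cone C b" "nc \<in> normal_cone C c"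
    "na + nb + nc = 0" "na \<noteq> 0 \<or> nb \<noteq> 0 \<or> nc \<noteq> 0"
    using assms unfolding normal_balanced_def by blast
  define s where "s = norm na + norm nb + norm nc"
  have s: "s > 0" using n(5) by (auto simp: s_def add_pos_nonneg add_nonneg_pos)
  show thesis
  proof (rule that)
    show "(1/s) *\<^sub>R na \<in> normal_cone C a" "(1/s) *\<^sub>R nb \<in> normal_cone C b"
      "(1/s) *\<^sub>R nc \<in> normal_cone C c"
      using n(1-3) s by (simp_all add: normal_cone_scaleR)
    show "(1/s) *\<^sub>R na + (1/s) *\<^sub>R nb + (1/s) *\<^sub>R nc = 0"
      using n(4) by (simp flip: scaleR_right_distrib)
    show "norm ((1/s) *\<^sub>R na) + norm ((1/s) *\<^sub>R nb) + norm ((1/s) *\<^sub>R nc) = 1"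
      using s by (simp add: s_def[symmetric] add_divide_distrib[symmetric])
  qed
qed

lemma compact_normalized_normal_triples:
  assumes K: "compact K"
  shows "compact {((a, b, c), (na, nb, nc)). a \<in> K \<and> b \<in> K \<and> c \<in> K \<and>
    na \<in> normal_cone K a \<and> nb \<in> normal_cone K b \<and> nc \<in> normal_cone K c \<and>
    na + nb + nc = 0 \<and> norm na + norm nb + norm nc = 1}" (is "compact ?X")
proof -
  have bnd: "norm u \<le> 1 \<and> norm v \<le> 1 \<and> norm w \<le> 1" if "norm u + norm v + norm w = 1" for u v w :: pt
    using that norm_ge_zero[of u] norm_ge_zero[of v] norm_ge_zero[of w] by linarith
  have "?X = ((K \<times> K \<times> K) \<times> (cball 0 1 \<times> cball 0 1 \<times> cball 0 1)) \<inter>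
      {p. fst (snd p) \<in> normal_cone K (fst (fst p))} \<inter>
      {p. fst (snd (snd p)) \<in> normal_cone K (fst (snd (fst p)))} \<inter>
      {p. snd (snd (snd p)) \<in> normal_cone K (snd (snd (fst p)))} \<inter>
      {p. fst (snd p) + fst (snd (snd p)) + snd (snd (snd p)) = 0} \<inter>
      {p. norm (fst (snd p)) + norm (fst (snd (snd p))) + norm (snd (snd (snd p))) = 1}"
    by (auto dest: bnd)
  also have "compact \<dots>"
    by (intro compact_Int_closed compact_Times K compact_cball closed_Int closed_Collect_normal_cone
        closed_Collect_eq continuous_intros)
  finally show ?thesis .
qed

lemma triangle_length_minimum_exists:
  assumes K: "compact K" and T: "compact T" "T \<noteq> {}" and nb: "normal_balanced K a0 b0 c0"
  obtains a b c where "normal_balanced K a b c"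
    "\<And>a' b' c'. normal_balanced K a' b' c' \<Longrightarrow> triangle_length T a b c \<le> triangle_length T a' b' c'"
proof -
  define X where "X = {((a, b, c), (na, nb, nc)). a \<in> K \<and> b \<in> K \<and> c \<in> K \<and>
    na \<in> normal_cone K a \<and> nb \<in> normal_cone K b \<and> nc \<in> normal_cone K c \<and>
    na + nb + nc = 0 \<and> norm na + norm nb + norm nc = (1::real)}"
  define len where "len p = triangle_length T (fst (fst p)) (fst (snd (fst p))) (snd (snd (fst p)))"
    for p :: "(pt \<times> pt \<times> pt) \<times> (pt \<times> pt \<times> pt)"
  have lift: "\<exists>n. ((a, b, c), n) \<in> X" if abc: "normal_balanced K a b c" for a b c
  proof -
    obtain na nb nc where "na \<in> normal_cone K a" "nb \<in> normal_cone K b" "nc \<in> normal_cone K c"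
      "na + nb + nc = 0" "norm na + norm nb + norm nc = 1"
      using normal_balanced_normalized[OF abc] .
    then have "((a, b, c), (na, nb, nc)) \<in> X" using abc unfolding normal_balanced_def X_def by simp
    then show ?thesis by blast
  qed
  have "compact X" unfolding X_def by (rule compact_normalized_normal_triples[OF K])
  moreover have "X \<noteq> {}" using lift[OF nb] by blast
  moreover have "continuous_on X len"
    unfolding len_def by (intro continuous_on_triangle_length T continuous_intros)
  ultimately obtain p where p: "p \<in> X" "\<And>p'. p' \<in> X \<Longrightarrow> len p \<le> len p'"
    using continuous_attains_inf by metis
  obtain a b c na nb nc where pe: "p = ((a, b, c), (na, nb, nc))" by (metis prod.collapse)
  show thesis
  proof (rule that)
    have "na \<noteq> 0 \<or> nb \<noteq> 0 \<or> nc \<noteq> 0" using p(1) by (auto simp: pe X_def)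
    then show "normal_balanced K a b c" using p(1) unfolding pe X_def normal_balanced_def by blast
    show "triangle_length T a b c \<le> triangle_length T a' b' c'"
      if "normal_balanced K a' b' c'" for a' b' c'
      using lift[OF that] p(2) by (force simp: pe len_def)
  qed
qed

section \<open>Weak three-bounce trajectories\<close>

text \<open>A closed three-bounce trajectory without the polygon conditions: vertices may coincide or be
  collinear.\<close>
definition weak_traj3 :: "pt set \<Rightarrow> pt set \<Rightarrow> pt \<Rightarrow> pt \<Rightarrow> pt \<Rightarrow> pt \<Rightarrow> pt \<Rightarrow> pt \<Rightarrow> bool" where
  "weak_traj3 K T a b c x y z \<longleftrightarrow> a \<in> K \<and> b \<in> K \<and> c \<in> K \<and> x \<in> T \<and> y \<in> T \<and> z \<in> T \<and>
     b - a \<in> normal_cone T x \<and> c - b \<in> normal_cone T y \<and> a - c \<in> normal_cone T z \<and>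
     z - x \<in> normal_cone K a \<and> x - y \<in> normal_cone K b \<and> y - z \<in> normal_cone K c"

lemma weak_traj3_rotate: "weak_traj3 K T a b c x y z \<Longrightarrow> weak_traj3 K T b c a y z x"
  unfolding weak_traj3_def by auto

lemma weak_traj3_if_pairing_eq:
  assumes "compact K" "compact T" "a \<in> K" "b \<in> K" "c \<in> K" "x \<in> T" "y \<in> T" "z \<in> T"
    and "triangle_length T a b c = triangle_pairing a b c x y z"
    and "triangle_length K x z y = triangle_pairing a b c x y z"
  shows "weak_traj3 K T a b c x y z"
proof -
  have "support_fun T (b - a) = (b - a) \<bullet> x" "support_fun T (c - b) = (c - b) \<bullet> y"
    "support_fun T (a - c) = (a - c) \<bullet> z"
    using support_fun_ge[OF assms(2,6), of "b - a"] support_fun_ge[OF assms(2,7), of "c - b"]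
      support_fun_ge[OF assms(2,8), of "a - c"] assms(9)
    unfolding triangle_length_def triangle_pairing_def by linarith+
  moreover have "support_fun K (z - x) = (z - x) \<bullet> a" "support_fun K (x - y) = (x - y) \<bullet> b"
    "support_fun K (y - z) = (y - z) \<bullet> c"
    using support_fun_ge[OF assms(1,3), of "z - x"] support_fun_ge[OF assms(1,4), of "x - y"]
      support_fun_ge[OF assms(1,5), of "y - z"] assms(10)
    unfolding triangle_length_def triangle_pairing_dual[of a] by (simp_all add: triangle_pairing_def)
  ultimately show ?thesis
    using assms(3-8) normal_cone_support_funI[OF assms(2)] normal_cone_support_funI[OF assms(1)]
    by (auto simp: weak_traj3_def)
qed

text \<open>The two dual constructions sandwich the pairing between the lengths, so at a minimiser all the
  inequalities are equalities.\<close>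
lemma weak_traj3_of_minimal:
  assumes K: "convex_body K" and T: "convex_body T" and nb: "normal_balanced K a b c"
    and min: "\<And>a' b' c'. normal_balanced K a' b' c' \<Longrightarrow>
      triangle_length T a b c \<le> triangle_length T a' b' c'"
  obtains x y z where "weak_traj3 K T a b c x y z"
proof -
  have cK: "compact K" and cT: "compact T" using convex_bodyD K T by auto
  obtain x y z where xyz: "normal_balanced T x y z"
    "triangle_length K x z y = triangle_pairing a b c x y z"
    using normal_balanced_dual_rev[OF T cK nb] .
  obtain a' b' c' where abc': "normal_balanced K a' b' c'"
    "triangle_length T a' b' c' \<le> triangle_length K x z y"
    using normal_balanced_dual_le[OF K cT xyz(1)] .
  have inK: "a \<in> K" "b \<in> K" "c \<in> K" using nb by (auto simp: normal_balanced_def)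
  have inT: "x \<in> T" "y \<in> T" "z \<in> T" using xyz(1) by (auto simp: normal_balanced_def)
  have "triangle_length T a b c = triangle_pairing a b c x y z"
    using min[OF abc'(1)] abc'(2) xyz(2) triangle_pairing_le_length[OF cT inT, of a b c] by linarith
  then show thesis using that weak_traj3_if_pairing_eq[OF cK cT inK(1-3) inT _ xyz(2)] by blast
qed

section \<open>Closed polygons and billiard trajectories\<close>

lemma nxt_less: "j < m \<Longrightarrow> nxt m j < m" unfolding nxt_def by simp

lemma prv_less: "j < m \<Longrightarrow> prv m j < m" unfolding prv_def by simp

lemma nxt_Suc: "Suc j < m \<Longrightarrow> nxt m j = Suc j" unfolding nxt_def by simp

lemma nxt_last: "0 < m \<Longrightarrow> nxt m (m - 1) = 0" unfolding nxt_def by simp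

lemma nxt_prv: assumes "j < m" shows "nxt m (prv m j) = j"
proof -
  have "nxt m (prv m j) = Suc (j + m - 1) mod m" unfolding nxt_def prv_def by (rule mod_Suc_eq)
  also have "Suc (j + m - 1) = j + m" using assms by simp
  finally show ?thesis using assms by simp
qed

lemma prv_nxt: assumes "j < m" shows "prv m (nxt m j) = j"
proof -
  have "prv m (nxt m j) = (Suc j mod m + (m - 1)) mod m"
    using assms unfolding nxt_def prv_def by simp
  also have "\<dots> = (Suc j + (m - 1)) mod m" by (rule mod_add_left_eq)
  also have "Suc j + (m - 1) = j + m" using assms by simp
  finally show ?thesis using assms by simp
qed

lemma sum_prv_diff:
  fixes f :: "nat \<Rightarrow> 'a::ab_group_add"
  assumes "0 < m" shows "(\<Sum>i<m. f (prv m i) - f i) = 0"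
proof -
  have "(\<Sum>i<m. f (prv m i)) = (\<Sum>i<m. f i)"
    by (rule sum.reindex_bij_witness[where i = "nxt m" and j = "prv m"])
       (use assms nxt_prv prv_nxt nxt_less prv_less in auto)
  then show ?thesis by (simp add: sum_subtractf)
qed

lemma sum_edges_telescope:
  fixes q :: "'a::ab_group_add list"
  assumes "i \<le> k" "k \<le> length q"
  shows "(\<Sum>j\<in>{i..<k}. q ! nxt (length q) j - q ! j) = q ! (k mod length q) - q ! (i mod length q)"
proof -
  have "(\<Sum>j\<in>{i..<k}. q ! nxt (length q) j - q ! j) =
      (\<Sum>j\<in>{i..<k}. q ! (Suc j mod length q) - q ! (j mod length q))"
    using assms by (intro sum.cong) (auto simp: nxt_def)
  also have "\<dots> = q ! (k mod length q) - q ! (i mod length q)"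
    by (rule sum_Suc_diff'[OF assms(1)])
  finally show ?thesis .
qed

lemma all_less_2: "(\<forall>j<2. P j) \<longleftrightarrow> P (0::nat) \<and> P 1"
  by (auto simp: numeral_2_eq_2 less_Suc_eq)

lemma all_less_3: "(\<forall>j<3. P j) \<longleftrightarrow> P (0::nat) \<and> P 1 \<and> P 2"
  by (auto simp: numeral_3_eq_3 numeral_2_eq_2 less_Suc_eq)

lemma ellT_triangle:
  assumes "convex_body T" shows "ellT T [a, b, c] = triangle_length T a b c"
proof -
  have "{..<length [a, b, c]} = {0, 1, 2}" by auto
  then show ?thesis
    by (simp add: ellT_def nxt_def triangle_length_def mu_polar_eq_support_fun[OF assms])
qed

lemma ellT_two:
  assumes "convex_body T" shows "ellT T [a, b] = support_fun T (b - a) + support_fun T (a - b)"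
proof -
  have "{..<length [a, b]} = {0, 1}" by auto
  then show ?thesis by (simp add: ellT_def nxt_def mu_polar_eq_support_fun[OF assms])
qed

lemma billiard_traj_with_3I:
  assumes "a \<in> frontier K" "b \<in> frontier K" "c \<in> frontier K" "a \<noteq> b" "b \<noteq> c" "c \<noteq> a"
    "a \<notin> closed_segment c b" "b \<notin> closed_segment a c" "c \<notin> closed_segment b a"
    "x \<in> frontier T" "y \<in> frontier T" "z \<in> frontier T"
    "b - a \<in> normal_cone T x" "c - b \<in> normal_cone T y" "a - c \<in> normal_cone T z"
    "z - x \<in> normal_cone K a" "x - y \<in> normal_cone K b" "y - z \<in> normal_cone K c"
  shows "billiard_traj_with K T [a, b, c] (\<lambda>j. if j = 0 then x else if j = 1 then y else z)"
proof -
  have "y - x \<in> uminus ` normal_cone K b" "z - y \<in> uminus ` normal_cone K c"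
    "x - z \<in> uminus ` normal_cone K a"
    using assms(16-18) by (metis minus_diff_eq rev_image_eqI)+
  moreover have len: "length [a, b, c] = 3" by simp
  ultimately show ?thesis using assms
    unfolding billiard_traj_with_def closed_polygon_def len all_less_3 by (simp add: nxt_def prv_def)
qed

lemma billiard_traj_with_2I:
  assumes "a \<in> frontier K" "b \<in> frontier K" "a \<noteq> b" "x \<in> frontier T" "z \<in> frontier T"
    "b - a \<in> normal_cone T x" "a - b \<in> normal_cone T z"
    "x - z \<in> normal_cone K b" "z - x \<in> normal_cone K a"
  shows "billiard_traj_with K T [a, b] (\<lambda>j. if j = 0 then x else z)"
proof -
  have "z - x \<in> uminus ` normal_cone K b" "x - z \<in> uminus ` normal_cone K a"
    using assms(8,9) by (metis minus_diff_eq rev_image_eqI)+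
  moreover have len: "length [a, b] = 2" by simp
  ultimately show ?thesis using assms
    unfolding billiard_traj_with_def closed_polygon_def len all_less_2 by (simp add: nxt_def prv_def)
qed

lemma billiard_traj_withD:
  assumes "billiard_traj_with K T q p" "j < length q"
  shows "p j \<in> frontier T" "q ! nxt (length q) j - q ! j \<in> normal_cone T (p j)"
    "p j - p (nxt (length q) j) \<in> normal_cone K (q ! nxt (length q) j)" "q ! j \<in> frontier K"
    "q ! j \<noteq> q ! nxt (length q) j"
      "q ! j \<notin> closed_segment (q ! prv (length q) j) (q ! nxt (length q) j)"
proof -
  have "p (nxt (length q) j) - p j \<in> uminus ` normal_cone K (q ! nxt (length q) j)"
    using assms unfolding billiard_traj_with_def by blast
  then show "p j - p (nxt (length q) j) \<in> normal_cone K (q ! nxt (length q) j)"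
    by (metis image_iff minus_diff_eq minus_minus)
qed (use assms nth_mem[OF assms(2)] in \<open>auto simp: billiard_traj_with_def closed_polygon_def\<close>)

lemma billiard_traj_with_length: "billiard_traj_with K T q p \<Longrightarrow> length q \<ge> 2"
  unfolding billiard_traj_with_def closed_polygon_def by blast

lemma closed_polygon3_not_collinear:
  assumes "closed_polygon [a, b, c]" shows "\<not> collinear {a, b, c}"
proof
  have len: "length [a, b, c] = 3" by simp
  have "a \<notin> closed_segment c b" "b \<notin> closed_segment a c" "c \<notin> closed_segment b a"
    using assms unfolding closed_polygon_def len all_less_3 by (simp_all add: nxt_def prv_def)
  moreover assume "collinear {a, b, c}"
  then have "between (b, c) a \<or> between (c, a) b \<or> between (a, b) c"
    using collinear_between_cases by blast
  ultimately show False by (auto simp: between_mem_segment closed_segment_commute)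
qed

lemma aff_dim_billiard_traj:
  assumes tr: "billiard_traj_with K T q p" and m: "length q = 2 \<or> length q = 3"
  shows "aff_dim (set q) = int (length q) - 1"
  using m
proof
  assume "length q = 2"
  then obtain a b where "q = [a, b]" by (auto simp: numeral_2_eq_2 length_Suc_conv)
  moreover have "q ! 0 \<noteq> q ! 1"
    using billiard_traj_withD(5)[OF tr, of 0] \<open>length q = 2\<close> by (simp add: nxt_def)
  ultimately show ?thesis by simp
next
  assume "length q = 3"
  then obtain a b c where q: "q = [a, b, c]" by (auto simp: numeral_3_eq_3 length_Suc_conv)
  have "\<not> collinear {a, b, c}"
    using closed_polygon3_not_collinear tr q by (auto simp: billiard_traj_with_def)
  then have "aff_dim {a, b, c} \<ge> 2" by (simp add: collinear_aff_dim)
  moreover have "aff_dim {a, b, c} \<le> 2" using aff_dim_le_DIM[of "{a, b, c}"] by simp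
  ultimately show ?thesis using q by simp
qed

section \<open>Minimising trajectories\<close>

locale minkowski_billiard =
  fixes K T :: "pt set"
  assumes K_body: "convex_body K" and T_body: "convex_body T"
    and T_strict: "strictly_convex T" and T_smooth: "smooth_body T"
begin

lemmas K = convex_bodyD[OF K_body] and T = convex_bodyD[OF T_body]

lemma billiard_traj3_of_weak_traj3:
  assumes tr: "weak_traj3 K T a b c x y z" and d: "a \<noteq> b" "b \<noteq> c" "c \<noteq> a"
    and s: "a \<notin> closed_segment c b" "b \<notin> closed_segment a c" "c \<notin> closed_segment b a"
  shows "billiard_traj K T [a, b, c]"
proof -
  have h: "a \<in> K" "b \<in> K" "c \<in> K" "x \<in> T" "y \<in> T" "z \<in> T"
     "b - a \<in> normal_cone T x" "c - b \<in> normal_cone T y" "a - c \<in> normal_cone T z"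
     "z - x \<in> normal_cone K a" "x - y \<in> normal_cone K b" "y - z \<in> normal_cone K c"
    using tr unfolding weak_traj3_def by auto
  have nz: "b - a \<noteq> 0" "c - b \<noteq> 0" "a - c \<noteq> 0" using d by auto
  have fT: "x \<in> frontier T" "y \<in> frontier T" "z \<in> frontier T"
    using normal_cone_frontier[OF h(4,7) nz(1)] normal_cone_frontier[OF h(5,8) nz(2)]
      normal_cone_frontier[OF h(6,9) nz(3)] by auto
  have parallel_segment: "v \<in> closed_segment u w"
    if uvw: "p \<in> frontier T" "v - u \<in> normal_cone T p" "w - v \<in> normal_cone T p" "v \<noteq> u" "w \<noteq> v"
    for u v w p
  proof -
    obtain k where "k > 0" "w - v = k *\<^sub>R (v - u)"
      using smooth_body_normal_cone_parallel[OF T_body T_smooth uvw(1-3)] uvw(4,5) by auto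
    then show ?thesis by (intro closed_segment_of_parallel)
  qed
  have "z \<noteq> x"
    using parallel_segment[where p=x and u=c and v=a and w=b] fT h(7,9) s(1) d
    by (auto simp: closed_segment_commute)
  moreover have "x \<noteq> y"
    using parallel_segment[where p=x and u=a and v=b and w=c] fT h(7,8) s(2) d by auto
  moreover have "y \<noteq> z"
    using parallel_segment[where p=y and u=b and v=c and w=a] fT h(8,9) s(3) d by auto
  ultimately have "a \<in> frontier K" "b \<in> frontier K" "c \<in> frontier K"
    using normal_cone_frontier[OF h(1,10)] normal_cone_frontier[OF h(2,11)]
      normal_cone_frontier[OF h(3,12)] by auto
  then have "billiard_traj_with K T [a, b, c] (\<lambda>j. if j = 0 then x else if j = 1 then y else z)"
    by (rule billiard_traj_with_3I[OF _ _ _ d s fT h(7-12)])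
  then show ?thesis unfolding billiard_traj_def by blast
qed

lemma billiard_traj2_of_weak_traj3_double:
  assumes tr: "weak_traj3 K T a b b x y z" and d: "a \<noteq> b"
  shows "billiard_traj K T [a, b]"
proof -
  have h: "a \<in> K" "b \<in> K" "x \<in> T" "y \<in> T" "z \<in> T"
     "b - a \<in> normal_cone T x" "a - b \<in> normal_cone T z"
     "z - x \<in> normal_cone K a" "x - y \<in> normal_cone K b" "y - z \<in> normal_cone K b"
    using tr unfolding weak_traj3_def by auto
  have nz: "b - a \<noteq> 0" "a - b \<noteq> 0" using d by auto
  have "x \<noteq> z" using support_points_distinct[OF T_body h(3,5) nz(1) h(6)] h(7) by simp
  moreover have nb: "x - z \<in> normal_cone K b" using normal_cone_add[OF h(9,10)] by simp
  ultimately have "a \<in> frontier K" "b \<in> frontier K"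
    using normal_cone_frontier[OF h(1,8)] normal_cone_frontier[OF h(2) nb] by auto
  moreover have "x \<in> frontier T" "z \<in> frontier T"
    using normal_cone_frontier[OF h(3,6) nz(1)] normal_cone_frontier[OF h(5,7) nz(2)] by auto
  ultimately have "billiard_traj_with K T [a, b] (\<lambda>j. if j = 0 then x else z)"
    using billiard_traj_with_2I d h(6,7) nb h(8) by blast
  then show ?thesis unfolding billiard_traj_def by blast
qed

lemma billiard_traj2_of_weak_traj3_collinear:
  assumes tr: "weak_traj3 K T a b c x y z" and m: "b \<in> open_segment a c"
  shows "billiard_traj K T [a, c]" "triangle_length T a b c = ellT T [a, c]"
proof -
  have h: "a \<in> K" "c \<in> K" "x \<in> T" "y \<in> T" "z \<in> T"
     "b - a \<in> normal_cone T x" "c - b \<in> normal_cone T y" "a - c \<in> normal_cone T z"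
     "z - x \<in> normal_cone K a" "y - z \<in> normal_cone K c"
    using tr unfolding weak_traj3_def by auto
  obtain u where u: "a \<noteq> c" "0 < u" "u < 1" "b = (1 - u) *\<^sub>R a + u *\<^sub>R c"
    using m unfolding in_segment by blast
  have ba: "b - a = u *\<^sub>R (c - a)" and cb: "c - b = (1 - u) *\<^sub>R (c - a)"
    using u(4) by (simp_all add: algebra_simps)
  have nz: "c - a \<noteq> 0" "a - c \<noteq> 0" using u(1) by auto
  have nx: "c - a \<in> normal_cone T x"
    using normal_cone_scaleR[OF h(6), of "1/u"] u(2) by (simp add: ba)
  have ny: "c - a \<in> normal_cone T y"
    using normal_cone_scaleR[OF h(7), of "1/(1-u)"] u(3) by (simp add: cb)
  have "x = y" by (rule strictly_convex_normal_cone_unique[OF T_strict h(3,4) nz(1) nx ny])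
  then have nc: "x - z \<in> normal_cone K c" using h(10) by simp
  have "x \<noteq> z" using support_points_distinct[OF T_body h(3,5) nz(1) nx] h(8) by simp
  then have "a \<in> frontier K" "c \<in> frontier K"
    using normal_cone_frontier[OF h(1,9)] normal_cone_frontier[OF h(2) nc] by auto
  moreover have "x \<in> frontier T" "z \<in> frontier T"
    using normal_cone_frontier[OF h(3) nx nz(1)] normal_cone_frontier[OF h(5,8) nz(2)] by auto
  ultimately have "billiard_traj_with K T [a, c] (\<lambda>j. if j = 0 then x else z)"
    using billiard_traj_with_2I u(1) nx h(8) nc h(9) by blast
  then show "billiard_traj K T [a, c]" unfolding billiard_traj_def by blast
  show "triangle_length T a b c = ellT T [a, c]"
    using support_fun_scaleR[OF T(1,5), of u "c - a"] support_fun_scaleR[OF T(1,5), of "1 - u"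
      "c - a"] u(2,3)
    by (simp add: ellT_two[OF T_body] triangle_length_def ba cb algebra_simps)
qed

text \<open>Pruning coinciding or collinear vertices leaves a trajectory with two or three bounces.\<close>
lemma billiard_traj_of_weak_traj3:
  assumes tr: "weak_traj3 K T a b c x y z" and nc: "\<not> (a = b \<and> b = c)"
  obtains Q where "billiard_traj K T Q" "ellT T Q = triangle_length T a b c"
proof -
  have tr2: "weak_traj3 K T b c a y z x" and tr3: "weak_traj3 K T c a b z x y"
    using weak_traj3_rotate tr by blast+
  have len2: "triangle_length T a b b = ellT T [a, b]" for a b
    using support_fun_0[OF T(1,5)] by (simp add: ellT_two[OF T_body] triangle_length_def)
  consider "b = c" | "c = a" | "a = b" | "a \<noteq> b" "b \<noteq> c" "c \<noteq> a" by blast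
  then show thesis
  proof cases
    case 1 with tr nc len2 show thesis by (metis that billiard_traj2_of_weak_traj3_double)
  next
    case 2 with tr2 nc len2 show thesis
      by (metis that triangle_length_rotate billiard_traj2_of_weak_traj3_double)
  next
    case 3 with tr3 nc len2 show thesis
      by (metis that triangle_length_rotate billiard_traj2_of_weak_traj3_double)
  next
    case 4
    consider "b \<in> open_segment a c" | "c \<in> open_segment b a" | "a \<in> open_segment c b"
      | "a \<notin> closed_segment c b" "b \<notin> closed_segment a c" "c \<notin> closed_segment b a"
      using 4 by (auto simp: open_segment_def)
    then show thesis
    proof cases
      case 1 with tr show thesis by (metis that billiard_traj2_of_weak_traj3_collinear)
    next
      case 2 with tr2 show thesis
        by (metis that triangle_length_rotate billiard_traj2_of_weak_traj3_collinear)
    next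
      case 3 with tr3 show thesis
        by (metis that triangle_length_rotate billiard_traj2_of_weak_traj3_collinear)
    next
      case 5: 4
      then show thesis
        using that billiard_traj3_of_weak_traj3[OF tr 4 5] ellT_triangle[OF T_body] by blast
    qed
  qed
qed

lemma minimizing_traj_le_triangle_length:
  assumes mt: "minimizing_traj K T q" and nb: "normal_balanced K a b c"
  shows "ellT T q \<le> triangle_length T a b c"
proof -
  obtain a' b' c' where min: "normal_balanced K a' b' c'"
    "\<And>a'' b'' c''. normal_balanced K a'' b'' c'' \<Longrightarrow>
      triangle_length T a' b' c' \<le> triangle_length T a'' b'' c''"
    using triangle_length_minimum_exists[OF K(1) T(1,5) nb] by blast
  obtain x y z where "weak_traj3 K T a' b' c' x y z"
    using weak_traj3_of_minimal[OF K_body T_body min] .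
  moreover have "\<not> (a' = b' \<and> b' = c')" using normal_balanced_not_constant[OF K_body] min(1) by blast
  ultimately obtain Q where "billiard_traj K T Q" "ellT T Q = triangle_length T a' b' c'"
    using billiard_traj_of_weak_traj3 by blast
  then show ?thesis using mt min(2)[OF nb] unfolding minimizing_traj_def by fastforce
qed

text \<open>Equal support points would make two consecutive edges positively parallel, by smoothness of
  \<open>T\<close>, and put a vertex between its neighbours.\<close>
lemma billiard_traj_with_support_points_neq:
  assumes tr: "billiard_traj_with K T q p" and j: "j < length q"
  shows "p j \<noteq> p (nxt (length q) j)"
proof
  assume eq: "p j = p (nxt (length q) j)"
  define i where "i = nxt (length q) j"
  have i: "i < length q" unfolding i_def using nxt_less[OF j] .
  note hj = billiard_traj_withD[OF tr j] and hi = billiard_traj_withD[OF tr i]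
  have nz: "q ! i - q ! j \<noteq> 0" "q ! nxt (length q) i - q ! i \<noteq> 0"
    using hj(5) hi(5) by (simp_all add: i_def)
  have "q ! nxt (length q) i - q ! i \<in> normal_cone T (p j)" using hi(2) eq by (simp add: i_def)
  then obtain k where "k > 0" "q ! nxt (length q) i - q ! i = k *\<^sub>R (q ! i - q ! j)"
    using smooth_body_normal_cone_parallel[OF T_body T_smooth hj(1)] hj(2) nz by (metis i_def)
  then have "q ! i \<in> closed_segment (q ! j) (q ! nxt (length q) i)"
    by (rule closed_segment_of_parallel)
  then show False using hi(6) prv_nxt[OF j] by (simp add: i_def)
qed

lemma billiard_traj_with_normal:
  assumes tr: "billiard_traj_with K T q p" and i: "i < length q"
  shows "p (prv (length q) i) - p i \<in> normal_cone K (q ! i)" "p (prv (length q) i) - p i \<noteq> 0"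
proof -
  have i': "prv (length q) i < length q" using prv_less[OF i] .
  show "p (prv (length q) i) - p i \<in> normal_cone K (q ! i)"
    using billiard_traj_withD(3)[OF tr i'] by (simp add: nxt_prv[OF i])
  show "p (prv (length q) i) - p i \<noteq> 0"
    using billiard_traj_with_support_points_neq[OF tr i'] by (simp add: nxt_prv[OF i])
qed

lemma support_fun_arc_less:
  assumes tr: "billiard_traj_with K T q p" and J: "J \<subseteq> {..<length q}" "j \<in> J" "nxt (length q) j \<in> J"
  shows "support_fun T (\<Sum>i\<in>J. q ! nxt (length q) i - q ! i) <
    (\<Sum>i\<in>J. support_fun T (q ! nxt (length q) i - q ! i))"
proof (rule support_fun_sum_less[OF T(1) T_strict _ J(2,3)])
  have j: "j < length q" "nxt (length q) j < length q" using J by auto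
  note h = billiard_traj_withD[OF tr j(1)] billiard_traj_withD[OF tr j(2)]
  show "finite J" using J(1) finite_subset by blast
  show "p j \<in> T" "p (nxt (length q) j) \<in> T" using h(1,7) T(6) by blast+
  show "p j \<noteq> p (nxt (length q) j)" by (rule billiard_traj_with_support_points_neq[OF tr j(1)])
  show "q ! nxt (length q) j - q ! j \<in> normal_cone T (p j)"
    "q ! nxt (length q) (nxt (length q) j) - q ! nxt (length q) j
      \<in> normal_cone T (p (nxt (length q) j))"
    using h(2,8) .
  show "q ! nxt (length q) j - q ! j \<noteq> 0"
    "q ! nxt (length q) (nxt (length q) j) - q ! nxt (length q) j \<noteq> 0"
    using h(5,11) by simp_all
qed

text \<open>One of the three arcs shortcut by the triangle contains two consecutive edges, on which strict
  convexity of \<open>T\<close> makes \<open>support_fun T\<close> strictly subadditive.\<close>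
lemma triangle_length_less_ellT:
  assumes tr: "billiard_traj_with K T q p" and m4: "length q \<ge> 4"
    and ii: "i1 < i2" "i2 \<le> i3" "i3 < length q"
  shows "triangle_length T (q ! i1) (q ! i2) (q ! i3) < ellT T q"
proof -
  define m where "m = length q"
  define v where "v i = q ! nxt m i - q ! i" for i
  define J1 J2 J3 where "J1 = {i1..<i2}" "J2 = {i2..<i3}" "J3 = {i3..<m} \<union> {0..<i1}"
  have edges: "q ! i2 - q ! i1 = sum v J1" "q ! i3 - q ! i2 = sum v J2" "q ! i1 - q ! i3 = sum v J3"
  proof -
    have "sum v J3 = sum v {i3..<m} + sum v {0..<i1}"
      unfolding J1_J2_J3_def by (rule sum.union_disjoint) (use ii in auto)
    then show "q ! i1 - q ! i3 = sum v J3"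
      using sum_edges_telescope[of i3 m q] sum_edges_telescope[of 0 i1 q] ii
        by (simp add: v_def m_def)
  qed (use sum_edges_telescope[of i1 i2 q] sum_edges_telescope[of i2 i3 q] ii in
      \<open>simp_all add: v_def m_def J1_J2_J3_def\<close>)
  have part: "{..<m} = J1 \<union> J2 \<union> J3" "J1 \<inter> J2 = {}" "(J1 \<union> J2) \<inter> J3 = {}"
    using ii by (auto simp: J1_J2_J3_def m_def)
  have fin: "finite J1" "finite J2" "finite J3" by (simp_all add: J1_J2_J3_def)
  have sub: "J1 \<subseteq> {..<m}" "J2 \<subseteq> {..<m}" "J3 \<subseteq> {..<m}" using part(1) by auto
  have len: "ellT T q = (\<Sum>j\<in>J1. support_fun T (v j)) + (\<Sum>j\<in>J2. support_fun T (v j)) +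
      (\<Sum>j\<in>J3. support_fun T (v j))"
    unfolding ellT_def mu_polar_eq_support_fun[OF T_body] m_def[symmetric] v_def[symmetric] part(1)
    using part(2,3) fin by (simp add: sum.union_disjoint)
  have le: "support_fun T (sum v J) \<le> (\<Sum>j\<in>J. support_fun T (v j))" if "finite J" for J
    using support_fun_sum_le[OF T(1,5) that] .
  have less: "support_fun T (sum v J) < (\<Sum>j\<in>J. support_fun T (v j))"
    if "J \<subseteq> {..<m}" "j \<in> J" "nxt m j \<in> J" for J j
    using support_fun_arc_less[OF tr, of J j] that by (simp add: v_def m_def)
  have "i2 - i1 \<ge> 2 \<or> i3 - i2 \<ge> 2 \<or> m - i3 \<ge> 2 \<or> i1 \<ge> 2 \<or> (m - i3 = 1 \<and> i1 = 1)"
    using ii m4 by (simp add: m_def) linarith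
  then have "support_fun T (sum v J1) < (\<Sum>j\<in>J1. support_fun T (v j)) \<or>
      support_fun T (sum v J2) < (\<Sum>j\<in>J2. support_fun T (v j)) \<or>
      support_fun T (sum v J3) < (\<Sum>j\<in>J3. support_fun T (v j))"
  proof (elim disjE)
    assume "m - i3 = 1 \<and> i1 = 1"
    moreover have "nxt m (m - 1) = 0" using m4 by (intro nxt_last) (auto simp: m_def)
    ultimately have "m - 1 \<in> J3" "nxt m (m - 1) \<in> J3" using m4 ii by (auto simp: J1_J2_J3_def m_def)
    then show ?thesis using less[OF sub(3)] by blast
  qed (use less[OF sub(1), of i1] less[OF sub(2), of i2] less[OF sub(3), of i3] less[OF sub(3), of 0]
      nxt_Suc[of _ m] ii m4 in \<open>auto simp: J1_J2_J3_def m_def\<close>)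
  then show ?thesis
    unfolding len triangle_length_def edges
      using le[OF fin(1)] le[OF fin(2)] le[OF fin(3)] by linarith
qed

lemma minimizing_traj_length_le_3:
  assumes mt: "minimizing_traj K T q" shows "length q \<le> 3"
proof (rule ccontr)
  assume "\<not> length q \<le> 3"
  then have m4: "length q \<ge> 4" by simp
  obtain p where tr: "billiard_traj_with K T q p"
    using mt unfolding minimizing_traj_def billiard_traj_def by blast
  define m where "m = length q"
  define n where "n i = p (prv m i) - p i" for i
  have n: "n i \<in> normal_cone K (q ! i)" "n i \<noteq> 0" if "i < m" for i
    using billiard_traj_with_normal[OF tr] that by (simp_all add: n_def m_def)
  have "(\<Sum>i<m. (1 / real m) *\<^sub>R n i) \<in> convex hull (n ` {..<m})"
    using m4 by (intro convex_sum) (auto simp: m_def intro: hull_inc)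
  moreover have "(\<Sum>i<m. (1 / real m) *\<^sub>R n i) = 0"
    using sum_prv_diff[of m p] m4 by (auto simp: n_def m_def simp flip: scaleR_sum_right)
  ultimately have "0 \<in> convex hull (n ` {..<m})" by simp
  then obtain i1 i2 i3 c1 c2 c3 where i: "i1 < i2" "i2 \<le> i3" "i3 < m"
    and c: "c1 \<ge> 0" "c2 \<ge> 0" "c3 \<ge> 0" "c1 *\<^sub>R n i1 + c2 *\<^sub>R n i2 + c3 *\<^sub>R n i3 = 0"
      "c1 > 0 \<or> c2 > 0 \<or> c3 > 0"
    using zero_convex_combination_three[of n m] n(2) by blast
  have "normal_balanced K (q ! i1) (q ! i2) (q ! i3)"
    unfolding normal_balanced_def
  proof (intro conjI exI)
    show "q ! i1 \<in> K" "q ! i2 \<in> K" "q ! i3 \<in> K"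
      using billiard_traj_withD(4)[OF tr] i K(6) by (auto simp: m_def)
    show "c1 *\<^sub>R n i1 \<in> normal_cone K (q ! i1)" "c2 *\<^sub>R n i2 \<in> normal_cone K (q ! i2)"
      "c3 *\<^sub>R n i3 \<in> normal_cone K (q ! i3)"
      using n(1) i c(1-3) by (auto intro: normal_cone_scaleR)
    show "c1 *\<^sub>R n i1 \<noteq> 0 \<or> c2 *\<^sub>R n i2 \<noteq> 0 \<or> c3 *\<^sub>R n i3 \<noteq> 0"
      using n(2) i c(5) by auto
  qed (rule c(4))
  then have "ellT T q \<le> triangle_length T (q ! i1) (q ! i2) (q ! i3)"
    by (rule minimizing_traj_le_triangle_length[OF mt])
  moreover have "triangle_length T (q ! i1) (q ! i2) (q ! i3) < ellT T q"
    using triangle_length_less_ellT[OF tr m4] i by (simp add: m_def)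
  ultimately show False by linarith
qed

lemma shorter_balanced_triangle_of_tilted_normal:
  assumes tr: "weak_traj3 K T a b c x y z" and dist: "a \<noteq> b" "b \<noteq> c" "c \<noteq> a"
    and d: "d \<in> normal_cone K a" "d \<noteq> 0" and ab: "\<alpha> \<ge> 0" "\<beta> \<ge> 0"
    and sum0: "d + \<alpha> *\<^sub>R (x - y) + \<beta> *\<^sub>R (y - z) = 0" and tilt: "\<And>k. z - x \<noteq> k *\<^sub>R d"
  obtains a' b' c' where "normal_balanced K a' b' c'"
    "triangle_length T a' b' c' < triangle_length T a b c"
proof -
  have h: "a \<in> K" "b \<in> K" "c \<in> K" "x \<in> T" "y \<in> T" "z \<in> T"
     "b - a \<in> normal_cone T x" "c - b \<in> normal_cone T y" "a - c \<in> normal_cone T z"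
     "x - y \<in> normal_cone K b" "y - z \<in> normal_cone K c"
    using tr unfolding weak_traj3_def by auto
  have "(- (\<alpha> *\<^sub>R (x - y))) + (- (\<beta> *\<^sub>R (y - z))) + (- d) = 0"
    using sum0 by (simp add: algebra_simps)
  then obtain k x' y' z' where k: "k > 0" "y' - x' = k *\<^sub>R (- (\<alpha> *\<^sub>R (x - y)))"
    "z' - y' = k *\<^sub>R (- (\<beta> *\<^sub>R (y - z)))" "x' - z' = k *\<^sub>R (- d)" and bal: "normal_balanced T x' y' z'"
    using normal_balanced_triangle_with_edges[OF T_body] d(2) by (metis neg_equal_0_iff_equal)
  have e: "z' - x' = (k *\<^sub>R d)" "x' - y' = (k * \<alpha>) *\<^sub>R (x - y)" "y' - z' = (k * \<beta>) *\<^sub>R (y - z)"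
    using k(2-4) by (auto simp: algebra_simps)
  have inT: "x' \<in> T" "y' \<in> T" "z' \<in> T" using bal by (auto simp: normal_balanced_def)
  have "triangle_length K x' z' y' = triangle_pairing x' z' y' a c b"
    using k(1) ab by (intro triangle_length_eq_pairing[OF K(1) h(1,3,2)])
      (simp_all add: e normal_cone_scaleR d h(10,11))
  then have dual: "triangle_length K x' z' y' = triangle_pairing a b c x' y' z'"
    by (simp add: triangle_pairing_dual[of a])
  have "x' \<noteq> x \<or> z' \<noteq> z" using tilt[of k] e(1) by auto
  then have "triangle_pairing a b c x' y' z' < triangle_length T a b c"
    using triangle_pairing_less_length[OF T(1) T_strict h(4-9) inT] dist by blast
  moreover obtain a' b' c' where "normal_balanced K a' b' c'"
    "triangle_length T a' b' c' \<le> triangle_length K x' z' y'"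
    using normal_balanced_dual_le[OF K_body T(1) bal] .
  ultimately show thesis using that dual by fastforce
qed

text \<open>At a corner of \<open>K\<close> the normal \<open>z - x\<close> can be tilted within the normal cone; since the edges
  \<open>x - y\<close> and \<open>y - z\<close> span the plane, a small tilt keeps the other two coefficients nonnegative.\<close>
lemma shorter_balanced_triangle_at_corner:
  assumes tr: "weak_traj3 K T a b c x y z" and dist: "a \<noteq> b" "b \<noteq> c" "c \<noteq> a"
    and nc: "\<not> collinear {x, y, z}" and fa: "a \<in> frontier K" and ns: "\<not> smooth_point K a"
  obtains a' b' c' where "normal_balanced K a' b' c'"
    "triangle_length T a' b' c' < triangle_length T a b c"
proof -
  have na: "z - x \<in> normal_cone K a" using tr unfolding weak_traj3_def by blast
  have "z - x \<noteq> 0" using nc by (auto simp: insert_commute)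
  then obtain w where w: "w \<in> normal_cone K a" "\<And>c. w \<noteq> c *\<^sub>R (z - x)"
    using nonsmooth_point_normal_cone[OF fa ns na] by blast
  obtain s t where wst: "w = s *\<^sub>R (x - y) + t *\<^sub>R (y - z)"
    using not_collinear_decompose[OF not_collinear_edges[OF nc]] .
  define e where "e = 1 / (2 * (\<bar>s\<bar> + \<bar>t\<bar> + 1))"
  have e: "e > 0" "e * \<bar>s\<bar> < 1" "e * \<bar>t\<bar> < 1" by (simp_all add: e_def field_simps add_pos_nonneg)
  define d where "d = (z - x) + e *\<^sub>R w"
  have "d \<in> normal_cone K a"
    using normal_cone_add[OF na normal_cone_scaleR[OF w(1)]] e(1) by (simp add: d_def)
  moreover have "1 - e * s \<ge> 0" "1 - e * t \<ge> 0" using e abs_ge_self[of s] abs_ge_self[of t]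
    by (smt (verit) mult_left_mono)+
  moreover have "d + (1 - e * s) *\<^sub>R (x - y) + (1 - e * t) *\<^sub>R (y - z) = 0"
    by (simp add: d_def wst algebra_simps)
  moreover have tilt: "z - x \<noteq> k *\<^sub>R d" for k
  proof
    assume "z - x = k *\<^sub>R d"
    then have kw: "(k * e) *\<^sub>R w = (1 - k) *\<^sub>R (z - x)" by (simp add: d_def algebra_simps)
    have "k \<noteq> 0" using \<open>z - x = k *\<^sub>R d\<close> \<open>z - x \<noteq> 0\<close> by auto
    then have "w = (1 / (k * e)) *\<^sub>R ((k * e) *\<^sub>R w)" using e(1) by simp
    also have "\<dots> = ((1 - k) / (k * e)) *\<^sub>R (z - x)" unfolding kw by simp
    finally show False using w(2) by blast
  qed
  moreover have "d \<noteq> 0"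
  proof
    assume "d = 0"
    then have "e *\<^sub>R w + (z - x) = 0" by (simp add: d_def add.commute)
    then have ew: "e *\<^sub>R w = - (z - x)" by (simp only: eq_neg_iff_add_eq_0)
    have "w = (1 / e) *\<^sub>R (e *\<^sub>R w)" using e(1) by simp
    also have "\<dots> = (- 1 / e) *\<^sub>R (z - x)" unfolding ew
      by (metis scaleR_minus_left scaleR_minus_right minus_divide_left)
    finally show False using w(2) by blast
  qed
  ultimately show thesis
    using shorter_balanced_triangle_of_tilted_normal[OF tr dist] that by blast
qed

lemma weak_traj3_of_billiard_traj_with:
  assumes tr: "billiard_traj_with K T [a, b, c] p"
  shows "weak_traj3 K T a b c (p 0) (p 1) (p 2)"
proof -
  have h: "j < length [a, b, c] \<Longrightarrow> p j \<in> T \<and> [a, b, c] ! j \<in> K" for j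
    using billiard_traj_withD(1,4)[OF tr] T(6) K(6) by blast
  show ?thesis
    using h[of 0] h[of 1] h[of 2] billiard_traj_withD(2,3)[OF tr, of 0]
      billiard_traj_withD(2,3)[OF tr, of 1] billiard_traj_withD(2,3)[OF tr, of 2]
    by (simp add: weak_traj3_def nxt_def numeral_2_eq_2)
qed

lemma billiard_traj_with3_not_collinear:
  assumes tr: "billiard_traj_with K T [a, b, c] p"
  shows "\<not> collinear {p 0, p 1, p 2}"
proof -
  have "p 0 \<noteq> p 1" "p 1 \<noteq> p 2" "p 2 \<noteq> p 0"
    using billiard_traj_with_support_points_neq[OF tr, of 0]
      billiard_traj_with_support_points_neq[OF tr, of 1]
      billiard_traj_with_support_points_neq[OF tr, of 2] by (simp_all add: nxt_def numeral_2_eq_2)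
  moreover have "p 0 \<in> frontier T" "p 1 \<in> frontier T" "p 2 \<in> frontier T"
    using billiard_traj_withD(1)[OF tr] by (simp_all add: numeral_2_eq_2)
  ultimately show ?thesis
    using strictly_convex_frontier_not_collinear[OF T_strict compact_imp_closed[OF T(1)]] by blast
qed

lemma minimizing_traj3_smooth:
  assumes mt: "minimizing_traj K T q" and q3: "length q = 3" and z: "z \<in> set q"
  shows "smooth_point K z"
proof -
  obtain a b c where q: "q = [a, b, c]" using q3 by (auto simp: numeral_3_eq_3 length_Suc_conv)
  obtain p where tr: "billiard_traj_with K T q p"
    using mt unfolding minimizing_traj_def billiard_traj_def by blast
  have corner: "smooth_point K a'"
    if h: "weak_traj3 K T a' b' c' x y w" "a' \<noteq> b'" "b' \<noteq> c'" "c' \<noteq> a'" "\<not> collinear {x, y, w}"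
      "a' \<in> frontier K" "triangle_length T a' b' c' = ellT T q" for a' b' c' x y w
  proof (rule ccontr)
    assume "\<not> smooth_point K a'"
    then obtain a'' b'' c'' where "normal_balanced K a'' b'' c''"
      "triangle_length T a'' b'' c'' < triangle_length T a' b' c'"
      using shorter_balanced_triangle_at_corner[OF h(1-6)] by blast
    then show False using minimizing_traj_le_triangle_length[OF mt] h(7) by fastforce
  qed
  have tr3: "weak_traj3 K T a b c (p 0) (p 1) (p 2)"
    using weak_traj3_of_billiard_traj_with tr q by blast
  have nc: "\<not> collinear {p 0, p 1, p 2}" using billiard_traj_with3_not_collinear tr q by blast
  have d: "a \<noteq> b" "b \<noteq> c" "c \<noteq> a" using closed_polygon3_not_collinear[of a b c] tr q
    by (auto simp: billiard_traj_with_def collinear_2 insert_absorb2 insert_commute)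
  have f: "a \<in> frontier K" "b \<in> frontier K" "c \<in> frontier K"
    using tr q by (auto simp: billiard_traj_with_def)
  have len: "triangle_length T a b c = ellT T q" using ellT_triangle[OF T_body] q by simp
  have "smooth_point K a" "smooth_point K b" "smooth_point K c"
    using corner[OF tr3 d nc f(1) len] corner[OF weak_traj3_rotate[OF tr3]]
      corner[OF weak_traj3_rotate[OF weak_traj3_rotate[OF tr3]]] d nc f len
      triangle_length_rotate[of T a b c] triangle_length_rotate[of T b c a]
    by (simp_all add: insert_commute)
  then show ?thesis using z q by auto
qed

lemma reflection_rule_normals:
  assumes tr: "billiard_traj_with K T q p" and rr: "reflection_rule K q p H n \<mu>" and i: "i < length q"
  shows "p (prv (length q) i) - p i = \<mu> i *\<^sub>R n i" "\<mu> i > 0"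
proof -
  have i': "prv (length q) i < length q" using prv_less[OF i] .
  have "\<mu> i \<ge> 0" "p i - p (prv (length q) i) = - (\<mu> i *\<^sub>R n i)"
    using rr i i' nxt_prv[OF i] unfolding reflection_rule_def by metis+
  then show eq: "p (prv (length q) i) - p i = \<mu> i *\<^sub>R n i" by (metis minus_diff_eq minus_minus)
  show "\<mu> i > 0" using billiard_traj_with_normal(2)[OF tr i] eq \<open>\<mu> i \<ge> 0\<close> by fastforce
qed

lemma reflection_rule_sum_normals:
  assumes tr: "billiard_traj_with K T q p" and rr: "reflection_rule K q p H n \<mu>"
  shows "(\<Sum>i<length q. \<mu> i *\<^sub>R n i) = 0"
proof -
  have "0 < length q" using billiard_traj_with_length[OF tr] by linarith
  have "(\<Sum>i<length q. \<mu> i *\<^sub>R n i) = (\<Sum>i<length q. p (prv (length q) i) - p i)"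
    using reflection_rule_normals(1)[OF tr rr] by simp
  also have "\<dots> = 0" using sum_prv_diff[OF \<open>0 < length q\<close>] .
  finally show ?thesis .
qed

lemma reflection_rule_convex_cone_hull:
  assumes tr: "billiard_traj_with K T q p" and rr: "reflection_rule K q p H n \<mu>"
  shows "subspace (convex_cone hull (n ` {..<length q}))"
    "convex_cone hull (n ` {..<length q}) = span (n ` {..<length q})"
proof -
  have "- x \<in> convex_cone hull (n ` {..<length q})" if "x \<in> n ` {..<length q}" for x
    using that neg_mem_convex_cone_hull[of "{..<length q}" \<mu>] reflection_rule_normals(2)[OF tr rr]
      reflection_rule_sum_normals[OF tr rr] by auto
  then show "subspace (convex_cone hull (n ` {..<length q}))"
    "convex_cone hull (n ` {..<length q}) = span (n ` {..<length q})"
    using convex_cone_hull_subspace by blast+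
qed

lemma reflection_rule_dim_normals:
  assumes tr: "billiard_traj_with K T q p" and rr: "reflection_rule K q p H n \<mu>"
    and m: "length q = 2 \<or> length q = 3"
  shows "dim (n ` {..<length q}) = length q - 1"
  using m
proof
  assume m2: "length q = 2"
  have "norm (n 0) = 1" using rr m2 unfolding reflection_rule_def by simp
  then have "n 0 \<noteq> 0" by auto
  have "\<mu> 0 *\<^sub>R n 0 + \<mu> 1 *\<^sub>R n 1 = 0" "\<mu> 1 > 0"
    using reflection_rule_sum_normals[OF tr rr] reflection_rule_normals(2)[OF tr rr] m2
    by (simp_all add: numeral_2_eq_2 lessThan_Suc add.commute)
  then have "n 1 = (1 / \<mu> 1) *\<^sub>R (- (\<mu> 0 *\<^sub>R n 0))"
    by (metis add.commute eq_neg_iff_add_eq_0 less_irrefl scaleR_one scaleR_scaleR divide_self_if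
        times_divide_eq_left mult_1)
  then have "n 1 = (- \<mu> 0 / \<mu> 1) *\<^sub>R n 0" by simp
  then have "n 1 \<in> span {n 0}" by (metis span_base span_scale singletonI)
  moreover have "n ` {..<length q} = insert (n 1) {n 0}"
    using m2 by (auto simp: numeral_2_eq_2 lessThan_Suc)
  ultimately show ?thesis using \<open>n 0 \<noteq> 0\<close> m2 by (simp add: dim_insert)
next
  assume m3: "length q = 3"
  then obtain a b c where q: "q = [a, b, c]" by (auto simp: numeral_3_eq_3 length_Suc_conv)
  have e: "p 0 - p 1 = \<mu> 1 *\<^sub>R n 1" "p 1 - p 2 = \<mu> 2 *\<^sub>R n 2" "\<mu> 1 > 0" "\<mu> 2 > 0"
    using reflection_rule_normals[OF tr rr, of 1] reflection_rule_normals[OF tr rr, of 2] m3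
    by (simp_all add: prv_def)
  have "\<not> collinear {0, p 0 - p 1, p 1 - p 2}"
    using not_collinear_edges billiard_traj_with3_not_collinear tr q by blast
  then have "\<not> collinear {0, n 1, n 2}" using collinear_scaleR_0[of "n 1" "n 2" "\<mu> 1" "\<mu> 2"] e by auto
  moreover have "{n 1, n 2} \<subseteq> n ` {..<length q}" using m3 by auto
  ultimately have "2 \<le> dim (n ` {..<length q})" using dim_pair_eq_2 dim_subset by metis
  moreover have "dim (n ` {..<length q}) \<le> 2" using dim_subset_UNIV[of "n ` {..<length q}"] by simp
  ultimately show ?thesis using m3 by simp
qed

end

theorem corollary1p5:
  fixes K T :: "(real^2) set" and q :: "(real^2) list"
  assumes "convex_body K" and "convex_body T"
    and "strictly_convex T" and "smooth_body T"
    and "minimizing_traj K T q"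
  shows "length q \<in> {2, 3}
    \<and> (length q = 3 \<longrightarrow> (\<forall>z\<in>set q. smooth_point K z))
    \<and> (\<forall>p H n mu. billiard_traj_with K T q p \<and> reflection_rule K q p H n mu \<longrightarrow>
         subspace (convex_cone hull (n ` {..<length q})) \<and>
         dim (convex_cone hull (n ` {..<length q})) = length q - 1)
    \<and> (\<forall>V. minimal_affine_section K q V \<longrightarrow> aff_dim V = int (length q) - 1)"
proof -
  interpret minkowski_billiard K T using assms(1-4) by unfold_locales
  obtain p where tr: "billiard_traj_with K T q p"
    using assms(5) unfolding minimizing_traj_def billiard_traj_def by blast
  have m: "length q = 2 \<or> length q = 3"
    using minimizing_traj_length_le_3[OF assms(5)] billiard_traj_with_length[OF tr] by auto
  moreover have "smooth_point K z" if "length q = 3" "z \<in> set q" for z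
    using minimizing_traj3_smooth[OF assms(5) that] .
  moreover have "subspace (convex_cone hull (n ` {..<length q})) \<and>
      dim (convex_cone hull (n ` {..<length q})) = length q - 1"
    if "billiard_traj_with K T q p'" "reflection_rule K q p' H n mu" for p' H n mu
    using reflection_rule_convex_cone_hull[OF that] reflection_rule_dim_normals[OF that m] by simp
  moreover have "aff_dim V = int (length q) - 1" if "minimal_affine_section K q V" for V
    using aff_dim_minimal_affine_section[OF assms(1) that] aff_dim_billiard_traj[OF tr m] m by auto
  ultimately show ?thesis by auto
qed

end
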